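(* Let $S(\mathbf{G}(V,E),\mathbf{\Sigma})$ be a constrained switching system with $\mathbf{\Sigma}\subset\mathbb{R}^{n\times n}$. Suppose $\gamma_*=\gamma_*(S)$ is attained by symmetric matrices $\{Q_v\succ0: v\in V\}$, i.e. $\gamma_*^2Q_v-A_\sigma^\top Q_wA_\sigma\succeq0$ for all $(v,w,\sigma)\in E$, and let $\mathcal{M}=\{|\cdot|_v\}$ with $|x|_v=(x^\top Q_vx)^{1/2}$ be the corresponding quadratic multinorm, of value $\gamma_*$. If the set of edges $$E'=\{(v,w,\sigma)\in E : \lambda_{\min}(\gamma_*^2Q_v-A_\sigma^\top Q_wA_\sigma)=0\}$$ forms a simple cycle $c$ in $\mathbf{G}$, then $\mathcal{M}$ is extremal (its value equals $\hat\rho(S)$), and $\hat\rho(S)=\rho(A_c)^{1/T}$, where $T$ is the length of $c$.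
   Context: An automaton $\mathbf{G}(V,E)$ is a strongly connected directed graph with finite node set $V$ and finite edge set $E$ of labelled edges $(v,w,\sigma)$, $\sigma$ indexing a matrix $A_\sigma\in\mathbf{\Sigma}$. A path is a sequence of consecutive edges; for a path with labels $\sigma(1),\dots,\sigma(T)$, $A_p=A_{\sigma(T)}\cdots A_{\sigma(1)}$. A cycle is a path whose source and destination coincide; a cycle is simple if for every node $v$ it visits there is no partition of the cycle into two cycles on $v$. A label sequence is accepted if it is the label sequence of some path (no prescribed initial/final node). The CJSR is $\hat\rho(S)=\lim_{t\to\infty}\max\{\|A_{\sigma(t-1)}\cdots A_{\sigma(0)}\|^{1/t} : \sigma(0),\dots,\sigma(t-1)\text{ accepted}\}$. $\gamma_*(S)$ is the infimum of $\gamma$ such that there exist symmetric $Q_v\succ0$ ($v\in V$) with $\gamma^2Q_v-A_\sigma^\top Q_wA_\sigma\succeq0$ for all $(v,w,\sigma)\in E$. A multinorm is a family of vector norms $\{|\cdot|_v:v\in V\}$; its value is $\min\{\gamma:|A_\sigma x|_w\le\gamma|x|_v\ \forall x,\ \forall(v,w,\sigma)\in E\}$, and it is extremal if its value equals $\hat\rho(S)$. $\rho(\cdot)$ denotes the spectral radius and $\lambda_{\min}$ the smallest eigenvalue of a symmetric matrix. *)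

theory Defs
  imports "HOL-Analysis.Analysis"
begin

text \<open>Nodes have type 'v (node set V), labels have type 's, the label s indexes the
  matrix A s :: real^'n^'n.\<close>

type_synonym ('v,'s) edge = "'v \<times> 'v \<times> 's"

definition esrc :: "('v,'s) edge \<Rightarrow> 'v" where "esrc e = fst e"
definition etgt :: "('v,'s) edge \<Rightarrow> 'v" where "etgt e = fst (snd e)"
definition elab :: "('v,'s) edge \<Rightarrow> 's" where "elab e = snd (snd e)"

definition is_path :: "('v,'s) edge set \<Rightarrow> ('v,'s) edge list \<Rightarrow> bool" where
  "is_path E p \<longleftrightarrow> set p \<subseteq> E \<and> successively (\<lambda>e e'. etgt e = esrc e') p"

definition automaton :: "'v set \<Rightarrow> ('v,'s) edge set \<Rightarrow> bool" where
  "automaton V E \<longleftrightarrow> finite V \<and> finite E \<and>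
     (\<forall>e\<in>E. esrc e \<in> V \<and> etgt e \<in> V) \<and>
     (\<forall>v\<in>V. \<forall>w\<in>V. v \<noteq> w \<longrightarrow>
        (\<exists>p. is_path E p \<and> p \<noteq> [] \<and> esrc (hd p) = v \<and> etgt (last p) = w))"

text \<open>Product of a label sequence s(1),...,s(T): A_{s(T)} ... A_{s(1)}.\<close>
definition label_prod :: "('s \<Rightarrow> real^'n^'n) \<Rightarrow> 's list \<Rightarrow> real^'n^'n" where
  "label_prod A ss = foldl (\<lambda>M s. A s ** M) (mat 1) ss"

definition path_prod :: "('s \<Rightarrow> real^'n^'n) \<Rightarrow> ('v,'s) edge list \<Rightarrow> real^'n^'n" where
  "path_prod A p = label_prod A (map elab p)"

definition accepted :: "('v,'s) edge set \<Rightarrow> nat \<Rightarrow> 's list set" where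
  "accepted E t = {map elab p | p. is_path E p \<and> length p = t}"

definition mnorm :: "real^'n^'n \<Rightarrow> real" where
  "mnorm M = onorm (\<lambda>x. M *v x)"

definition cjsr :: "('v,'s) edge set \<Rightarrow> ('s \<Rightarrow> real^'n^'n) \<Rightarrow> real" where
  "cjsr E A = lim (\<lambda>t. Max ((\<lambda>ss. mnorm (label_prod A ss) powr (1 / real t)) ` accepted E t))"

definition symmetric_mat :: "real^'n^'n \<Rightarrow> bool" where
  "symmetric_mat Q \<longleftrightarrow> transpose Q = Q"

definition pos_def :: "real^'n^'n \<Rightarrow> bool" where
  "pos_def Q \<longleftrightarrow> symmetric_mat Q \<and> (\<forall>x. x \<noteq> 0 \<longrightarrow> x \<bullet> (Q *v x) > 0)"

definition pos_semidef :: "real^'n^'n \<Rightarrow> bool" where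
  "pos_semidef M \<longleftrightarrow> symmetric_mat M \<and> (\<forall>x. x \<bullet> (M *v x) \<ge> 0)"

definition quad_feasible ::
  "'v set \<Rightarrow> ('v,'s) edge set \<Rightarrow> ('s \<Rightarrow> real^'n^'n) \<Rightarrow> real \<Rightarrow> ('v \<Rightarrow> real^'n^'n) \<Rightarrow> bool" where
  "quad_feasible V E A \<gamma> Q \<longleftrightarrow>
     (\<forall>v\<in>V. pos_def (Q v)) \<and>
     (\<forall>e\<in>E. pos_semidef (\<gamma>\<^sup>2 *\<^sub>R Q (esrc e) - transpose (A (elab e)) ** Q (etgt e) ** A (elab e)))"

definition gamma_star :: "'v set \<Rightarrow> ('v,'s) edge set \<Rightarrow> ('s \<Rightarrow> real^'n^'n) \<Rightarrow> real" where
  "gamma_star V E A = Inf {\<gamma>. \<gamma> \<ge> 0 \<and> (\<exists>Q. quad_feasible V E A \<gamma> Q)}"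

definition multinorm_value ::
  "('v,'s) edge set \<Rightarrow> ('s \<Rightarrow> real^'n^'n) \<Rightarrow> ('v \<Rightarrow> real^'n \<Rightarrow> real) \<Rightarrow> real" where
  "multinorm_value E A N =
     Inf {\<gamma>. \<forall>e\<in>E. \<forall>x. N (etgt e) (A (elab e) *v x) \<le> \<gamma> * N (esrc e) x}"

definition extremal ::
  "('v,'s) edge set \<Rightarrow> ('s \<Rightarrow> real^'n^'n) \<Rightarrow> ('v \<Rightarrow> real^'n \<Rightarrow> real) \<Rightarrow> bool" where
  "extremal E A N \<longleftrightarrow> multinorm_value E A N = cjsr E A"

definition quad_norm :: "('v \<Rightarrow> real^'n^'n) \<Rightarrow> 'v \<Rightarrow> real^'n \<Rightarrow> real" where
  "quad_norm Q v x = sqrt (x \<bullet> (Q v *v x))"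

definition lambda_min :: "real^'n^'n \<Rightarrow> real" where
  "lambda_min M = Min {l. \<exists>x. x \<noteq> 0 \<and> M *v x = l *\<^sub>R x}"

definition cmat :: "real^'n^'n \<Rightarrow> complex^'n^'n" where
  "cmat M = (\<chi> i j. complex_of_real (M $ i $ j))"

definition spectral_radius :: "real^'n^'n \<Rightarrow> real" where
  "spectral_radius M = Max (cmod ` {z. \<exists>x::complex^'n. x \<noteq> 0 \<and> cmat M *v x = z *s x})"

definition is_cycle :: "('v,'s) edge set \<Rightarrow> ('v,'s) edge list \<Rightarrow> bool" where
  "is_cycle E c \<longleftrightarrow> is_path E c \<and> c \<noteq> [] \<and> esrc (hd c) = etgt (last c)"

definition simple_cycle :: "('v,'s) edge set \<Rightarrow> ('v,'s) edge list \<Rightarrow> bool" where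
  "simple_cycle E c \<longleftrightarrow> is_cycle E c \<and> distinct (map esrc c)"

end

theory Submission
  imports Defs "Jordan_Normal_Form.Spectral_Radius"
begin

text \<open>A quadratic certificate \<open>Q\<close> of rate \<open>\<gamma>\<close> bounds every path product of length \<open>t\<close>
  by \<open>K \<gamma>\<^sup>t\<close>; hence \<open>\<rho>(A\<^sub>c)\<^sup>1\<^sup>/\<^sup>T \<le> \<gamma>\<^sub>*\<close> on every cycle and the multinorm has value \<open>\<gamma>\<^sub>*\<close>.
  Conversely, if \<open>\<rho>(A\<^sub>c) < \<gamma>\<^sub>*\<^sup>T\<close> on the critical cycle, powers of \<open>A\<^sub>c\<close> decay against \<open>\<gamma>\<^sub>*\<close>
  and a finite sum of Gram matrices of walks around \<open>c\<close> yields matrices \<open>P\<^sub>v\<close> that strictly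
  decrease along the edges of \<open>c\<close>. Since all other edges satisfy their constraint strictly,
  \<open>Q + t P\<close> is then feasible for a rate below \<open>\<gamma>\<^sub>*\<close>, which is absurd. So \<open>\<rho>(A\<^sub>c) = \<gamma>\<^sub>*\<^sup>T\<close>;
  the products along \<open>c\<close> then have norm at least \<open>a \<gamma>\<^sub>*\<^sup>t\<close>, which pins the CJSR to \<open>\<gamma>\<^sub>*\<close>.\<close>

hide_const (open) Spectral_Radius.spectral_radius Matrix.mat Matrix.vec Matrix.row Matrix.col
no_notation Matrix.vec_index (infixl "$" 100)
no_notation Matrix.scalar_prod (infix "\<bullet>" 70)

section \<open>Transfer to nat-indexed matrices\<close>

text \<open>The spectral facts needed below (finiteness and non-emptiness of the spectrum, bounded powers
  when the spectral radius is below 1) are available for the nat-indexed matrices of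
  Jordan_Normal_Form; we transport along a fixed enumeration of the index type.\<close>

definition enum_nth :: "nat \<Rightarrow> 'n::finite" where
  "enum_nth = (SOME h. bij_betw h {0..<CARD('n)} UNIV)"

definition enum_index :: "'n::finite \<Rightarrow> nat" where
  "enum_index = inv_into {0..<CARD('n)} enum_nth"

lemma bij_betw_enum_nth: "bij_betw (enum_nth :: nat \<Rightarrow> 'n::finite) {0..<CARD('n)} UNIV"
proof -
  have "\<exists>h. bij_betw h {0..<CARD('n)} (UNIV::'n set)"
    using ex_bij_betw_nat_finite[of "UNIV::'n set"] by simp
  then show ?thesis unfolding enum_nth_def by (rule someI_ex)
qed

lemma enum_index_less: "enum_index (k::'n::finite) < CARD('n)"
  unfolding enum_index_def using bij_betw_enum_nth[where 'n='n]
  by (metis atLeastLessThan_iff bij_betw_def inv_into_into iso_tuple_UNIV_I)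

lemma enum_nth_enum_index [simp]: "enum_nth (enum_index (k::'n::finite)) = k"
  unfolding enum_index_def using bij_betw_enum_nth[where 'n='n]
  by (metis bij_betw_def f_inv_into_f iso_tuple_UNIV_I)

lemma enum_index_enum_nth [simp]: "i < CARD('n::finite) \<Longrightarrow> enum_index (enum_nth i :: 'n) = i"
  unfolding enum_index_def using bij_betw_enum_nth[where 'n='n]
  by (metis atLeastLessThan_iff bij_betw_def inv_into_f_f zero_le)

lemma sum_enum_nth: "(\<Sum>j = 0..<CARD('n::finite). f (enum_nth j :: 'n)) = (\<Sum>k\<in>UNIV. f k)"
  using sum.reindex_bij_betw[OF bij_betw_enum_nth[where 'n='n], of f] by simp

definition to_jnf_mat :: "complex^'n^'n \<Rightarrow> complex Matrix.mat" where
  "to_jnf_mat X = Matrix.mat CARD('n::finite) CARD('n) (\<lambda>(i,j). X $ enum_nth i $ enum_nth j)"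

definition to_jnf_vec :: "complex^'n \<Rightarrow> complex Matrix.vec" where
  "to_jnf_vec x = Matrix.vec CARD('n::finite) (\<lambda>i. x $ enum_nth i)"

definition of_jnf_vec :: "complex Matrix.vec \<Rightarrow> complex^'n::finite" where
  "of_jnf_vec v = (\<chi> k. vec_index v (enum_index k))"

lemma to_jnf_mat_carrier: "to_jnf_mat (X::complex^'n^'n) \<in> carrier_mat CARD('n::finite) CARD('n)"
  unfolding to_jnf_mat_def by simp

lemma to_jnf_vec_carrier: "to_jnf_vec (x::complex^'n::finite) \<in> carrier_vec CARD('n)"
  unfolding to_jnf_vec_def by simp

lemma to_jnf_vec_mult: "to_jnf_vec (X *v x) = to_jnf_mat X *\<^sub>v to_jnf_vec (x::complex^'n::finite)"
proof (rule eq_vecI)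
  show "dim_vec (to_jnf_vec (X *v x)) = dim_vec (to_jnf_mat X *\<^sub>v to_jnf_vec x)"
    unfolding to_jnf_vec_def to_jnf_mat_def by simp
  fix i assume "i < dim_vec (to_jnf_mat X *\<^sub>v to_jnf_vec x)"
  then have i: "i < CARD('n)" unfolding to_jnf_mat_def by simp
  have "vec_index (to_jnf_mat X *\<^sub>v to_jnf_vec x) i
      = (\<Sum>j = 0..<CARD('n). X $ enum_nth i $ enum_nth j * x $ enum_nth j)"
    using i unfolding to_jnf_mat_def to_jnf_vec_def by (simp add: scalar_prod_def)
  also have "\<dots> = (\<Sum>k\<in>UNIV. X $ enum_nth i $ k * x $ k)"
    by (rule sum_enum_nth)
  also have "\<dots> = vec_index (to_jnf_vec (X *v x)) i"
    using i unfolding to_jnf_vec_def by (simp add: matrix_vector_mult_def)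
  finally show "vec_index (to_jnf_vec (X *v x)) i = vec_index (to_jnf_mat X *\<^sub>v to_jnf_vec x) i"
    by simp
qed

lemma to_jnf_mat_mult: "to_jnf_mat (X ** Y) = to_jnf_mat X * to_jnf_mat (Y::complex^'n^'n::finite)"
proof (rule eq_matI)
  fix i j assume "i < dim_row (to_jnf_mat X * to_jnf_mat Y)" "j < dim_col (to_jnf_mat X * to_jnf_mat Y)"
  then have i: "i < CARD('n)" and j: "j < CARD('n)" unfolding to_jnf_mat_def by auto
  have "(to_jnf_mat X * to_jnf_mat Y) $$ (i, j)
      = (\<Sum>l = 0..<CARD('n). X $ enum_nth i $ enum_nth l * Y $ enum_nth l $ enum_nth j)"
    using i j unfolding to_jnf_mat_def by (simp add: scalar_prod_def)
  also have "\<dots> = (\<Sum>k\<in>UNIV. X $ enum_nth i $ k * Y $ k $ enum_nth j)"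
    by (rule sum_enum_nth)
  also have "\<dots> = to_jnf_mat (X ** Y) $$ (i, j)"
    using i j unfolding to_jnf_mat_def by (simp add: matrix_matrix_mult_def)
  finally show "to_jnf_mat (X ** Y) $$ (i, j) = (to_jnf_mat X * to_jnf_mat Y) $$ (i, j)" by simp
qed (auto simp: to_jnf_mat_def)

lemma to_jnf_mat_one: "to_jnf_mat (mat 1 :: complex^'n^'n::finite) = 1\<^sub>m CARD('n)"
proof (rule eq_matI)
  fix i j assume "i < dim_row (1\<^sub>m CARD('n))" "j < dim_col (1\<^sub>m CARD('n))"
  then have i: "i < CARD('n)" and j: "j < CARD('n)" by auto
  have "(enum_nth i :: 'n) = enum_nth j \<longleftrightarrow> i = j"
    using i j by (metis enum_index_enum_nth)
  then show "to_jnf_mat (mat 1 :: complex^'n^'n) $$ (i, j) = 1\<^sub>m CARD('n) $$ (i, j)"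
    using i j unfolding to_jnf_mat_def by (simp add: Finite_Cartesian_Product.mat_def)
qed (auto simp: to_jnf_mat_def)

lemma to_jnf_vec_inject: "to_jnf_vec x = to_jnf_vec y \<Longrightarrow> x = (y::complex^'n::finite)"
proof (rule Finite_Cartesian_Product.vec_eq_iff[THEN iffD2], rule allI)
  fix k :: 'n
  assume "to_jnf_vec x = to_jnf_vec y"
  then have "vec_index (to_jnf_vec x) (enum_index k) = vec_index (to_jnf_vec y) (enum_index k)"
    by simp
  then show "x $ k = y $ k" using enum_index_less[of k] unfolding to_jnf_vec_def by simp
qed

lemma to_jnf_vec_zero: "to_jnf_vec (0::complex^'n::finite) = 0\<^sub>v CARD('n)"
  unfolding to_jnf_vec_def by (rule eq_vecI) auto

lemma to_jnf_vec_smult: "to_jnf_vec (z *s (x::complex^'n::finite)) = z \<cdot>\<^sub>v to_jnf_vec x"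
  unfolding to_jnf_vec_def by (rule eq_vecI) auto

lemma to_jnf_vec_of_jnf_vec:
  "v \<in> carrier_vec CARD('n::finite) \<Longrightarrow> to_jnf_vec (of_jnf_vec v :: complex^'n) = v"
  unfolding to_jnf_vec_def of_jnf_vec_def by (rule eq_vecI) auto

definition cvec_eigenvalues :: "complex^'n^'n \<Rightarrow> complex set" where
  "cvec_eigenvalues X = {z. \<exists>x::complex^'n. x \<noteq> 0 \<and> X *v x = z *s x}"

lemma cvec_eigenvalues_eq_spectrum:
  "cvec_eigenvalues (X::complex^'n^'n::finite) = Spectral_Radius.spectrum (to_jnf_mat X)"
proof (rule Set.set_eqI, rule iffI)
  fix z assume "z \<in> cvec_eigenvalues X"
  then obtain x where x: "x \<noteq> 0" "X *v x = z *s x" unfolding cvec_eigenvalues_def by auto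
  have "eigenvector (to_jnf_mat X) (to_jnf_vec x) z"
    unfolding eigenvector_def
  proof (intro conjI)
    show "to_jnf_vec x \<in> carrier_vec (dim_row (to_jnf_mat X))"
      using to_jnf_vec_carrier[of x] by (simp add: to_jnf_mat_def)
    show "to_jnf_vec x \<noteq> 0\<^sub>v (dim_row (to_jnf_mat X))"
      using x(1) to_jnf_vec_inject[of x 0] to_jnf_vec_zero[where 'n='n] by (auto simp: to_jnf_mat_def)
    show "to_jnf_mat X *\<^sub>v to_jnf_vec x = z \<cdot>\<^sub>v to_jnf_vec x"
      using x(2) to_jnf_vec_mult[of X x] to_jnf_vec_smult[of z x] by simp
  qed
  then show "z \<in> Spectral_Radius.spectrum (to_jnf_mat X)"
    unfolding Spectral_Radius.spectrum_def eigenvalue_def by auto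
next
  fix z assume "z \<in> Spectral_Radius.spectrum (to_jnf_mat X)"
  then obtain v where "eigenvector (to_jnf_mat X) v z"
    unfolding Spectral_Radius.spectrum_def eigenvalue_def by auto
  then have vc: "v \<in> carrier_vec CARD('n)" and v0: "v \<noteq> 0\<^sub>v CARD('n)"
    and ve: "to_jnf_mat X *\<^sub>v v = z \<cdot>\<^sub>v v"
    unfolding eigenvector_def by (auto simp: to_jnf_mat_def)
  define x where "x = (of_jnf_vec v :: complex^'n)"
  have tv: "to_jnf_vec x = v" unfolding x_def using to_jnf_vec_of_jnf_vec[OF vc] .
  have "x \<noteq> 0" using tv v0 to_jnf_vec_zero[where 'n='n] by auto
  moreover have "X *v x = z *s x"
    by (rule to_jnf_vec_inject) (simp add: to_jnf_vec_mult to_jnf_vec_smult tv ve)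
  ultimately show "z \<in> cvec_eigenvalues X" unfolding cvec_eigenvalues_def by auto
qed

lemma finite_cvec_eigenvalues: "finite (cvec_eigenvalues (X::complex^'n^'n::finite))"
  unfolding cvec_eigenvalues_eq_spectrum using card_finite_spectrum(1)[OF to_jnf_mat_carrier] .

lemma cvec_eigenvalues_nonempty: "cvec_eigenvalues (X::complex^'n^'n::finite) \<noteq> {}"
  unfolding cvec_eigenvalues_eq_spectrum
  using spectrum_non_empty[OF to_jnf_mat_carrier zero_less_card_finite] .

section \<open>Matrix powers and the operator norm\<close>

lemma matrix_add_rdistrib: "(B + C) ** A = B ** A + C ** (A::'a::semiring_1^'n^'m)"
  by (vector matrix_matrix_mult_def sum.distrib[symmetric] field_simps)

fun matpow :: "'a::comm_ring_1^'n^'n \<Rightarrow> nat \<Rightarrow> 'a^'n^'n" where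
  "matpow M 0 = mat 1"
| "matpow M (Suc k) = M ** matpow M k"

lemma matpow_Suc_right: "matpow M (Suc k) = matpow M k ** M"
  by (induction k) (simp_all add: matrix_mul_assoc)

lemma matpow_scaleR: "matpow (a *\<^sub>R M) k = (a ^ k) *\<^sub>R matpow (M::real^'n^'n) k"
proof -
  have "(a *\<^sub>R M) ** (b *\<^sub>R P) = (a * b) *\<^sub>R (M ** P)" for b and P :: "real^'n^'n"
    by (simp add: Finite_Cartesian_Product.vec_eq_iff matrix_matrix_mult_def sum_distrib_left
        algebra_simps)
  then show ?thesis by (induction k) simp_all
qed

lemma matpow_eigenvector: "X *v x = z *s x \<Longrightarrow> matpow X k *v x = z ^ k *s (x::complex^'n::finite)"
  by (induction k) (simp_all add: matrix_vector_mul_assoc[symmetric] vector_scalar_commute)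

lemma to_jnf_mat_matpow: "to_jnf_mat (matpow (X::complex^'n^'n::finite) k) = to_jnf_mat X ^\<^sub>m k"
proof (induction k)
  case 0
  have "dim_row (to_jnf_mat X) = CARD('n)" using to_jnf_mat_carrier[of X] by auto
  then show ?case by (simp add: to_jnf_mat_one)
next
  case (Suc k)
  show ?case unfolding matpow_Suc_right to_jnf_mat_mult Suc by simp
qed

lemma cmat_mult: "cmat (M ** N) = cmat M ** cmat N"
  unfolding cmat_def by (simp add: Finite_Cartesian_Product.vec_eq_iff matrix_matrix_mult_def)

lemma cmat_one: "cmat (mat 1) = mat 1"
  unfolding cmat_def by (simp add: Finite_Cartesian_Product.vec_eq_iff Finite_Cartesian_Product.mat_def)

lemma cmat_matpow: "cmat (matpow M k) = matpow (cmat M) k"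
  by (induction k) (simp_all add: cmat_one cmat_mult)

lemma cmat_scaleR_mult_vec: "cmat (a *\<^sub>R M) *v x = complex_of_real a *s (cmat M *v x)"
  unfolding cmat_def
  by (simp add: Finite_Cartesian_Product.vec_eq_iff matrix_vector_mult_def sum_distrib_left mult.assoc)

lemma norm_mult_vec_le_mnorm: "norm (M *v x) \<le> mnorm M * norm x"
  unfolding mnorm_def by (rule onorm[OF matrix_vector_mul_bounded_linear])

lemma mnorm_nonneg: "0 \<le> mnorm M"
  unfolding mnorm_def by (rule onorm_pos_le[OF matrix_vector_mul_bounded_linear])

lemma mnorm_le: "(\<And>x. norm (M *v x) \<le> b * norm x) \<Longrightarrow> mnorm M \<le> b"
  unfolding mnorm_def by (rule onorm_le)

lemma mnorm_mult_le: "mnorm (M ** N) \<le> mnorm M * mnorm N"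
proof (rule mnorm_le)
  fix x
  have "norm ((M ** N) *v x) = norm (M *v (N *v x))" by (simp add: matrix_vector_mul_assoc)
  also have "\<dots> \<le> mnorm M * norm (N *v x)" by (rule norm_mult_vec_le_mnorm)
  also have "\<dots> \<le> mnorm M * (mnorm N * norm x)"
    by (rule mult_left_mono[OF norm_mult_vec_le_mnorm mnorm_nonneg])
  finally show "norm ((M ** N) *v x) \<le> mnorm M * mnorm N * norm x" by (simp add: mult.assoc)
qed

lemma mnorm_scaleR: "mnorm (a *\<^sub>R M) = \<bar>a\<bar> * mnorm M"
proof -
  have "(\<lambda>x. (a *\<^sub>R M) *v x) = (\<lambda>x. a *\<^sub>R (M *v x))" by (simp add: scaleR_matrix_vector_assoc)
  then show ?thesis unfolding mnorm_def
    using onorm_scaleR[OF matrix_vector_mul_bounded_linear, of a M] by (metis (no_types))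
qed

lemma quadratic_form_abs_le: "\<bar>x \<bullet> (M *v x)\<bar> \<le> mnorm M * (norm (x::real^'n::finite))\<^sup>2"
proof -
  have "\<bar>x \<bullet> (M *v x)\<bar> \<le> norm x * norm (M *v x)" by (rule Cauchy_Schwarz_ineq2)
  also have "\<dots> \<le> norm x * (mnorm M * norm x)"
    by (rule mult_left_mono[OF norm_mult_vec_le_mnorm norm_ge_zero])
  finally show ?thesis by (simp add: power2_eq_square algebra_simps)
qed

section \<open>Spectral radius\<close>

lemma norm2_vec_eq_sum: "(norm (y::real^'n::finite))\<^sup>2 = (\<Sum>i\<in>UNIV. (y$i)\<^sup>2)"
  unfolding power2_norm_eq_inner inner_vec_def by (simp add: power2_eq_square)

definition vec_Re :: "complex^'n \<Rightarrow> real^'n" where "vec_Re x = (\<chi> i. Re (x $ i))"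
definition vec_Im :: "complex^'n \<Rightarrow> real^'n" where "vec_Im x = (\<chi> i. Im (x $ i))"

lemma norm_vec_Re_Im_pos: "x \<noteq> 0 \<Longrightarrow> 0 < (norm (vec_Re x))\<^sup>2 + (norm (vec_Im (x::complex^'n::finite)))\<^sup>2"
proof -
  assume "x \<noteq> 0"
  then obtain i where "x $ i \<noteq> 0" by (metis Finite_Cartesian_Product.vec_eq_iff zero_index)
  then have "0 < (vec_Re x $ i)\<^sup>2 + (vec_Im x $ i)\<^sup>2"
    by (simp add: vec_Re_def vec_Im_def complex_eq_iff sum_power2_gt_zero_iff)
  then have "0 < (\<Sum>i\<in>UNIV. (vec_Re x $ i)\<^sup>2 + (vec_Im x $ i)\<^sup>2)" by (intro sum_pos2[of UNIV i]) auto
  then show ?thesis by (simp add: norm2_vec_eq_sum sum.distrib)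
qed

text \<open>Real and imaginary part of a complex eigenvector of a real matrix span a plane on which
  the matrix acts as the similarity of ratio \<open>|w|\<close>.\<close>

lemma norm_mult_vec_Re_Im:
  fixes N :: "real^'n^'n::finite"
  assumes ev: "cmat N *v x = w *s x"
  shows "(norm (N *v vec_Re x))\<^sup>2 + (norm (N *v vec_Im x))\<^sup>2
    = (cmod w)\<^sup>2 * ((norm (vec_Re x))\<^sup>2 + (norm (vec_Im x))\<^sup>2)"
proof -
  let ?a = "vec_Re x" and ?b = "vec_Im x"
  have comp: "(cmat N *v x) $ i = (\<Sum>j\<in>UNIV. complex_of_real (N$i$j) * x$j)" for i
    unfolding cmat_def by (simp add: matrix_vector_mult_def)
  have "(N *v ?a) $ i = Re ((cmat N *v x) $ i)" "(N *v ?b) $ i = Im ((cmat N *v x) $ i)" for i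
    unfolding comp by (simp_all add: vec_Re_def vec_Im_def matrix_vector_mult_def Re_sum Im_sum)
  then have "(N *v ?a) $ i = Re w * ?a$i - Im w * ?b$i" "(N *v ?b) $ i = Im w * ?a$i + Re w * ?b$i"
    for i unfolding ev by (simp_all add: vec_Re_def vec_Im_def)
  then have "(norm (N *v ?a))\<^sup>2 + (norm (N *v ?b))\<^sup>2
      = (\<Sum>i\<in>UNIV. (Re w * ?a$i - Im w * ?b$i)\<^sup>2 + (Im w * ?a$i + Re w * ?b$i)\<^sup>2)"
    unfolding norm2_vec_eq_sum by (simp add: sum.distrib)
  also have "\<dots> = (\<Sum>i\<in>UNIV. ((Re w)\<^sup>2 + (Im w)\<^sup>2) * ((?a$i)\<^sup>2 + (?b$i)\<^sup>2))"
    by (rule sum.cong) (auto simp: power2_eq_square algebra_simps)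
  also have "\<dots> = (cmod w)\<^sup>2 * ((norm ?a)\<^sup>2 + (norm ?b)\<^sup>2)"
    unfolding norm2_vec_eq_sum by (simp add: cmod_power2 sum_distrib_left sum.distrib algebra_simps)
  finally show ?thesis .
qed

lemma eigenvalue_norm_le_mnorm:
  fixes N :: "real^'n^'n::finite"
  assumes x0: "x \<noteq> 0" and ev: "cmat N *v x = w *s x"
  shows "cmod w \<le> mnorm N"
proof -
  let ?S = "(norm (vec_Re x))\<^sup>2 + (norm (vec_Im x))\<^sup>2"
  have "(norm (N *v vec_Re x))\<^sup>2 \<le> (mnorm N * norm (vec_Re x))\<^sup>2"
    "(norm (N *v vec_Im x))\<^sup>2 \<le> (mnorm N * norm (vec_Im x))\<^sup>2"
    by (rule power_mono; simp add: norm_mult_vec_le_mnorm)+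
  then have "(cmod w)\<^sup>2 * ?S \<le> (mnorm N)\<^sup>2 * ?S"
    unfolding norm_mult_vec_Re_Im[OF ev, symmetric] by (simp add: power_mult_distrib algebra_simps)
  then have "(cmod w)\<^sup>2 \<le> (mnorm N)\<^sup>2" using norm_vec_Re_Im_pos[OF x0] by simp
  then show ?thesis using mnorm_nonneg by (rule power2_le_imp_le)
qed

lemma spectral_radius_eq_Max: "spectral_radius M = Max (cmod ` cvec_eigenvalues (cmat M))"
  by (simp add: Defs.spectral_radius_def cvec_eigenvalues_def)

lemma spectral_radius_attained:
  "\<exists>z\<in>cvec_eigenvalues (cmat M). cmod z = spectral_radius (M::real^'n^'n::finite)"
  unfolding spectral_radius_eq_Max
  using Max_in[of "cmod ` cvec_eigenvalues (cmat M)"] finite_cvec_eigenvalues cvec_eigenvalues_nonempty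
  by fastforce

lemma eigenvalue_norm_le_spectral_radius:
  "z \<in> cvec_eigenvalues (cmat M) \<Longrightarrow> cmod z \<le> spectral_radius (M::real^'n^'n::finite)"
  unfolding spectral_radius_eq_Max using finite_cvec_eigenvalues by (intro Max_ge) auto

lemma spectral_radius_nonneg: "0 \<le> spectral_radius (M::real^'n^'n::finite)"
  using spectral_radius_attained[of M] by (metis norm_ge_zero)

lemma spectral_radius_power_le_mnorm_matpow:
  "spectral_radius (M::real^'n^'n::finite) ^ k \<le> mnorm (matpow M k)"
proof -
  obtain z where z: "z \<in> cvec_eigenvalues (cmat M)" "cmod z = spectral_radius M"
    using spectral_radius_attained by blast
  then obtain x where x: "x \<noteq> 0" "cmat M *v x = z *s x" unfolding cvec_eigenvalues_def by auto
  have "cmat (matpow M k) *v x = z ^ k *s x"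
    unfolding cmat_matpow by (rule matpow_eigenvector[OF x(2)])
  from eigenvalue_norm_le_mnorm[OF x(1) this] show ?thesis using z(2) by (simp add: norm_power)
qed

lemma jnf_spectral_radius_to_jnf_mat:
  "Spectral_Radius.spectral_radius (to_jnf_mat (cmat M)) = spectral_radius (M::real^'n^'n::finite)"
  unfolding Spectral_Radius.spectral_radius_def spectral_radius_eq_Max cvec_eigenvalues_eq_spectrum ..

lemma spectral_radius_scaleR_le:
  assumes "0 < a"
  shows "spectral_radius (a *\<^sub>R M) \<le> a * spectral_radius (M::real^'n^'n::finite)"
proof -
  obtain z where z: "z \<in> cvec_eigenvalues (cmat (a *\<^sub>R M))" "cmod z = spectral_radius (a *\<^sub>R M)"
    using spectral_radius_attained by blast
  then obtain x where x: "x \<noteq> 0" "cmat (a *\<^sub>R M) *v x = z *s x" unfolding cvec_eigenvalues_def by auto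
  have "cmat M *v x = (1 / complex_of_real a) *s (complex_of_real a *s (cmat M *v x))"
    using assms by (simp add: vector_smult_assoc)
  also have "\<dots> = (z / complex_of_real a) *s x"
    using x(2) cmat_scaleR_mult_vec[of a M x] by (simp add: vector_smult_assoc)
  finally have "cmat M *v x = (z / complex_of_real a) *s x" .
  then have "cmod (z / complex_of_real a) \<le> spectral_radius M"
    using x(1) by (intro eigenvalue_norm_le_spectral_radius) (auto simp: cvec_eigenvalues_def)
  then show ?thesis using z(2) assms by (simp add: norm_divide field_simps)
qed

lemma mnorm_matpow_bounded:
  assumes "spectral_radius (B::real^'n^'n::finite) < 1"
  shows "\<exists>C. \<forall>k. mnorm (matpow B k) \<le> C"
proof -
  have "Spectral_Radius.spectral_radius (to_jnf_mat (cmat B)) < 1"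
    using assms by (simp add: jnf_spectral_radius_to_jnf_mat)
  then obtain C where C: "\<And>k. norm_bound (to_jnf_mat (cmat B) ^\<^sub>m k) C"
    using spectral_radius_jnf_norm_bound_less_1_upper_triangular[OF to_jnf_mat_carrier] by blast
  have "\<bar>matpow B k $ i $ j\<bar> \<le> C" for k i j
  proof -
    have "norm_bound (to_jnf_mat (cmat (matpow B k))) C"
      using C[of k] by (simp add: cmat_matpow to_jnf_mat_matpow)
    then have "cmod (cmat (matpow B k) $ enum_nth (enum_index i) $ enum_nth (enum_index j)) \<le> C"
      using enum_index_less[of i] enum_index_less[of j] unfolding norm_bound_def
      by (simp add: to_jnf_mat_def) (metis enum_nth_enum_index)
    then show ?thesis by (simp add: cmat_def)
  qed
  then show ?thesis unfolding mnorm_def using onorm_le_matrix_component by blast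
qed

lemma mnorm_matpow_le_geometric:
  assumes lt: "spectral_radius (M::real^'n^'n::finite) < s"
  shows "\<exists>C. \<forall>k. mnorm (matpow M k) \<le> C * s ^ k"
proof -
  have s: "0 < s" using lt spectral_radius_nonneg[of M] by linarith
  have "spectral_radius ((1 / s) *\<^sub>R M) \<le> spectral_radius M / s"
    using spectral_radius_scaleR_le[of "1 / s" M] s by simp
  also have "\<dots> < 1" using lt s by simp
  finally have "spectral_radius ((1 / s) *\<^sub>R M) < 1" .
  then obtain C where C: "\<And>k. mnorm (matpow ((1 / s) *\<^sub>R M) k) \<le> C"
    using mnorm_matpow_bounded by blast
  have "mnorm (matpow M k) \<le> C * s ^ k" for k
    using C[of k] s by (simp add: matpow_scaleR mnorm_scaleR power_one_over field_simps)
  then show ?thesis by blast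
qed

lemma mnorm_matpow_eventually_small:
  assumes lt: "spectral_radius (M::real^'n^'n::finite) < G" and \<epsilon>: "0 < \<epsilon>"
  shows "\<exists>n. mnorm (matpow M n) \<le> \<epsilon> * G ^ n"
proof -
  define s where "s = (spectral_radius M + G) / 2"
  have s: "spectral_radius M < s" "s < G" "0 < s"
    using lt spectral_radius_nonneg[of M] unfolding s_def by auto
  obtain C where C: "\<And>k. mnorm (matpow M k) \<le> C * s ^ k"
    using mnorm_matpow_le_geometric[OF s(1)] by blast
  obtain n where n: "(s / G) ^ n < \<epsilon> / (\<bar>C\<bar> + 1)"
    using real_arch_pow_inv[of "\<epsilon> / (\<bar>C\<bar> + 1)" "s / G"] \<epsilon> s by (auto simp: add_pos_nonneg)
  have "mnorm (matpow M n) \<le> (\<bar>C\<bar> + 1) * ((s / G) ^ n * G ^ n)"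
    using C[of n] s by (simp add: power_divide) (smt (verit) mult_right_mono zero_le_power)
  also have "\<dots> \<le> (\<bar>C\<bar> + 1) * (\<epsilon> / (\<bar>C\<bar> + 1) * G ^ n)"
    using n s by (intro mult_left_mono mult_right_mono) auto
  also have "\<dots> = \<epsilon> * G ^ n" by (simp add: add_pos_nonneg)
  finally show ?thesis by blast
qed

lemma finite_real_eigenvalues: "finite {l. \<exists>x. x \<noteq> 0 \<and> (M::real^'n^'n::finite) *v x = l *\<^sub>R x}"
proof -
  let ?S = "{l. \<exists>x. x \<noteq> 0 \<and> M *v x = l *\<^sub>R x}"
  have "complex_of_real ` ?S \<subseteq> cvec_eigenvalues (cmat M)"
  proof
    fix z assume "z \<in> complex_of_real ` ?S"
    then obtain l x where z: "z = complex_of_real l" and x: "x \<noteq> 0" "M *v x = l *\<^sub>R x" by auto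
    define y where "y = (\<chi> i. complex_of_real (x$i))"
    have "y \<noteq> 0" using x(1) unfolding y_def by (auto simp: Finite_Cartesian_Product.vec_eq_iff)
    moreover have "cmat M *v y = z *s y"
    proof -
      have "(\<Sum>j\<in>UNIV. M$i$j * x$j) = l * x$i" for i
        using x(2) by (simp add: matrix_vector_mult_def Finite_Cartesian_Product.vec_eq_iff)
      then have "(\<Sum>j\<in>UNIV. complex_of_real (M$i$j) * complex_of_real (x$j))
          = complex_of_real l * complex_of_real (x$i)" for i
        by (metis (no_types, lifting) of_real_mult of_real_sum sum.cong)
      then show ?thesis unfolding cmat_def y_def z
        by (simp add: Finite_Cartesian_Product.vec_eq_iff matrix_vector_mult_def)
    qed
    ultimately show "z \<in> cvec_eigenvalues (cmat M)" unfolding cvec_eigenvalues_def by auto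
  qed
  then have "finite (complex_of_real ` ?S)" using finite_cvec_eigenvalues finite_subset by blast
  then show ?thesis by (rule finite_imageD) (simp add: inj_on_def)
qed

lemma le_of_power_le_const_mult_power:
  fixes r G K :: real
  assumes G: "0 \<le> G" and bound: "\<And>q. 0 < q \<Longrightarrow> r ^ q \<le> K * G ^ q"
  shows "r \<le> G"
proof (rule ccontr)
  assume "\<not> r \<le> G"
  then have gt: "G < r" by simp
  show False
  proof (cases "G = 0")
    case True
    then show False using bound[of 1] gt by simp
  next
    case False
    then have Gp: "0 < G" using G by simp
    define x where "x = r / G"
    have x1: "1 < x" unfolding x_def using gt Gp by simp
    obtain n where n: "K < x ^ n" using real_arch_pow[OF x1] by blast
    have "x ^ n \<le> x ^ Suc n" using x1 by (intro power_increasing) auto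
    then have "K < x ^ Suc n" using n by simp
    then have "K * G ^ Suc n < x ^ Suc n * G ^ Suc n" using Gp by simp
    also have "\<dots> = r ^ Suc n" unfolding x_def using Gp by (simp add: power_divide)
    finally show False using bound[of "Suc n"] by simp
  qed
qed

section \<open>Quadratic forms\<close>

lemma inner_transpose_mult_vec: "x \<bullet> (transpose M *v y) = (M *v x) \<bullet> (y::real^'n::finite)"
  by (metis dot_lmul_matrix inner_commute transpose_matrix_vector)

lemma quadratic_form_gram: "x \<bullet> ((transpose B ** B) *v x) = (norm (B *v (x::real^'n::finite)))\<^sup>2"
  unfolding power2_norm_eq_inner by (metis inner_transpose_mult_vec matrix_vector_mul_assoc)

lemma quadratic_form_congruence:
  "x \<bullet> ((transpose B ** M ** B) *v x) = (B *v x) \<bullet> (M *v (B *v (x::real^'n::finite)))"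
  by (metis inner_transpose_mult_vec matrix_vector_mul_assoc)

lemma quadratic_form_add_scaleR:
  "x \<bullet> ((M + t *\<^sub>R N) *v x) = x \<bullet> (M *v x) + t * (x \<bullet> (N *v (x::real^'n::finite)))"
  by (simp add: matrix_vector_mult_add_rdistrib scaleR_matrix_vector_assoc[symmetric] inner_add_right)

lemma transpose_add: "transpose (X + Y) = transpose X + transpose (Y::'a::ab_group_add^'n^'m)"
  by (simp add: Finite_Cartesian_Product.vec_eq_iff transpose_def)

lemma transpose_diff: "transpose (X - Y) = transpose X - transpose (Y::'a::ab_group_add^'n^'m)"
  by (simp add: Finite_Cartesian_Product.vec_eq_iff transpose_def)

lemma transpose_sum: "transpose (\<Sum>k\<in>S. f k) = (\<Sum>k\<in>S. transpose (f k :: real^'n^'m))"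
  by (simp add: Finite_Cartesian_Product.vec_eq_iff transpose_def sum_component)

lemma sum_mult_vec: "(\<Sum>k\<in>S. F k) *v x = (\<Sum>k\<in>S. F k *v (x::real^'n::finite))"
  by (induction S rule: infinite_finite_induct) (simp_all add: matrix_vector_mult_add_rdistrib)

lemma nonneg_quadratic_imp_linear_coeff_zero:
  fixes p q :: real
  assumes all: "\<And>t. 0 \<le> 2*t*p + t^2*q" and q: "0 \<le> q" and p: "0 \<le> p"
  shows "p = 0"
proof (rule ccontr)
  assume "p \<noteq> 0"
  then have pp: "0 < p" using p by simp
  define t where "t = - p / (q+1)"
  have tq: "t * (q+1) = -p" unfolding t_def using q by simp
  have "(q+1)^2 * (2*t*p + t^2*q) = 2*p*(t*(q+1))*(q+1) + (t*(q+1))^2*q"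
    by (simp add: power2_eq_square algebra_simps)
  also have "\<dots> = - (p^2) * (q+2)" unfolding tq by (simp add: power2_eq_square algebra_simps)
  finally have "(q+1)^2 * (2*t*p + t^2*q) = - (p^2) * (q+2)" .
  moreover have "0 \<le> (q+1)^2 * (2*t*p + t^2*q)" using all[of t] by simp
  moreover have "0 < p^2 * (q+2)" using pp q by simp
  ultimately show False by linarith
qed

text \<open>Expand the form at \<open>x + t M x\<close>: it is \<open>2 t |M x|\<^sup>2 + t\<^sup>2 (M x)\<^sup>T M (M x)\<close>.\<close>

lemma pos_semidef_quadratic_form_zero_imp_kernel:
  fixes M :: "real^'n^'n::finite"
  assumes psd: "pos_semidef M" and x0: "x \<bullet> (M *v x) = 0"
  shows "M *v x = 0"
proof -
  have sym: "transpose M = M" and nonneg: "\<And>y. 0 \<le> y \<bullet> (M *v y)"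
    using psd unfolding pos_semidef_def symmetric_mat_def by auto
  define y where "y = M *v x"
  define p where "p = y \<bullet> y"
  define q where "q = y \<bullet> (M *v y)"
  have "0 \<le> 2*t*p + t^2*q" for t
  proof -
    have e1: "x \<bullet> (M *v y) = p" unfolding p_def y_def by (metis inner_transpose_mult_vec sym)
    have e2: "y \<bullet> (M *v x) = p" unfolding p_def y_def by simp
    have "(x + t *\<^sub>R y) \<bullet> (M *v (x + t *\<^sub>R y))
        = x \<bullet> (M *v x) + t * (x \<bullet> (M *v y)) + t * (y \<bullet> (M *v x)) + t^2 * q"
      unfolding q_def
      by (simp add: matrix_vector_right_distrib matrix_vector_mult_scaleR inner_add_left
          inner_add_right power2_eq_square algebra_simps)
    then show ?thesis using nonneg[of "x + t *\<^sub>R y"] e1 e2 x0 by (simp add: mult.commute)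
  qed
  then have "p = 0"
    by (rule nonneg_quadratic_imp_linear_coeff_zero) (simp_all add: q_def p_def nonneg)
  then show ?thesis unfolding p_def y_def by simp
qed

lemma pos_semidef_lambda_min_nonzero_imp_pos_def:
  fixes M :: "real^'n^'n::finite"
  assumes psd: "pos_semidef M" and nz: "lambda_min M \<noteq> 0"
  shows "pos_def M"
proof (rule ccontr)
  assume "\<not> pos_def M"
  then obtain x where x0: "x \<noteq> 0" and xle: "x \<bullet> (M *v x) \<le> 0"
    using psd unfolding pos_def_def pos_semidef_def by auto
  have nonneg: "\<And>y. 0 \<le> y \<bullet> (M *v y)" using psd unfolding pos_semidef_def by auto
  then have "x \<bullet> (M *v x) = 0" using xle by (simp add: order_antisym)
  then have "M *v x = 0" by (rule pos_semidef_quadratic_form_zero_imp_kernel[OF psd])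
  then have zero_eig: "0 \<in> {l. \<exists>x. x \<noteq> 0 \<and> M *v x = l *\<^sub>R x}" using x0 by auto
  have "0 \<le> l" if "l \<in> {l. \<exists>x. x \<noteq> 0 \<and> M *v x = l *\<^sub>R x}" for l
  proof -
    from that obtain y where y: "y \<noteq> 0" "M *v y = l *\<^sub>R y" by blast
    have "0 \<le> l * (y \<bullet> y)" using nonneg[of y] y(2) by simp
    moreover have "0 < y \<bullet> y" using y(1) by simp
    ultimately show ?thesis by (simp add: zero_le_mult_iff)
  qed
  then have "lambda_min M = 0" unfolding lambda_min_def
    by (intro Min_eqI[OF finite_real_eigenvalues]) (use zero_eig in auto)
  then show False using nz by simp
qed

lemma pos_def_quadratic_form_lower_bound:
  fixes M :: "real^'n^'n::finite"
  assumes pd: "\<And>x. x \<noteq> 0 \<Longrightarrow> 0 < x \<bullet> (M *v x)"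
  shows "\<exists>c>0. \<forall>x. c * (norm x)\<^sup>2 \<le> x \<bullet> (M *v x)"
proof -
  have "continuous_on (sphere 0 1) (\<lambda>x::real^'n. x \<bullet> (M *v x))"
    by (intro continuous_on_inner continuous_on_id linear_continuous_on
        matrix_vector_mul_bounded_linear)
  moreover have "sphere (0::real^'n) 1 \<noteq> {}"
    using vector_choose_size[of 1] by (metis empty_iff mem_sphere_0 zero_le_one)
  ultimately obtain u where u: "u \<in> sphere 0 1"
    and umin: "\<And>y. y \<in> sphere 0 1 \<Longrightarrow> u \<bullet> (M *v u) \<le> y \<bullet> (M *v y)"
    using continuous_attains_inf[OF compact_sphere] by blast
  define c where "c = u \<bullet> (M *v u)"
  have "c * (norm x)\<^sup>2 \<le> x \<bullet> (M *v x)" for x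
  proof (cases "x = 0")
    case False
    define y where "y = (1 / norm x) *\<^sub>R x"
    have "y \<in> sphere 0 1" unfolding y_def using False by simp
    then have "c \<le> y \<bullet> (M *v y)" unfolding c_def by (rule umin)
    moreover have "x \<bullet> (M *v x) = (norm x)\<^sup>2 * (y \<bullet> (M *v y))"
      using False by (simp add: y_def matrix_vector_mult_scaleR power2_eq_square)
    ultimately show ?thesis by (metis mult.commute mult_right_mono zero_le_power2)
  qed simp
  moreover have "0 < c" unfolding c_def using u by (intro pd) auto
  ultimately show ?thesis by blast
qed

lemma finite_uniform_quadratic_lower_bound:
  fixes M :: "'a \<Rightarrow> real^'n^'n::finite"
  assumes "finite S" and pd: "\<And>s x. s \<in> S \<Longrightarrow> x \<noteq> 0 \<Longrightarrow> 0 < x \<bullet> (M s *v x)"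
  shows "\<exists>c>0. \<forall>s\<in>S. \<forall>x. c * (norm x)\<^sup>2 \<le> x \<bullet> (M s *v x)"
  using assms
proof (induction S rule: finite_induct)
  case empty
  show ?case by (intro exI[of _ 1]) auto
next
  case (insert a S)
  obtain c1 where c1: "c1 > 0" "\<forall>s\<in>S. \<forall>x. c1 * (norm x)\<^sup>2 \<le> x \<bullet> (M s *v x)"
    using insert by blast
  obtain c2 where c2: "c2 > 0" "\<forall>x. c2 * (norm x)\<^sup>2 \<le> x \<bullet> (M a *v x)"
    using pos_def_quadratic_form_lower_bound[of "M a"] insert.prems by blast
  have "min c1 c2 * (norm x)\<^sup>2 \<le> c1 * (norm x)\<^sup>2" "min c1 c2 * (norm x)\<^sup>2 \<le> c2 * (norm x)\<^sup>2"
    for x by (intro mult_right_mono; simp)+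
  then have "\<forall>s\<in>insert a S. \<forall>x. min c1 c2 * (norm x)\<^sup>2 \<le> x \<bullet> (M s *v x)"
    using c1(2) c2(2) by (metis insert_iff order_trans)
  then show ?case using c1(1) c2(1) by (intro exI[of _ "min c1 c2"]) auto
qed

lemma finite_uniform_quadratic_abs_bound:
  fixes M :: "'a \<Rightarrow> real^'n^'n::finite"
  assumes "finite S"
  shows "\<exists>U>0. \<forall>s\<in>S. \<forall>x. \<bar>x \<bullet> (M s *v x)\<bar> \<le> U * (norm x)\<^sup>2"
proof -
  define U where "U = (\<Sum>s\<in>S. mnorm (M s)) + 1"
  have "\<bar>x \<bullet> (M s *v x)\<bar> \<le> U * (norm x)\<^sup>2" if "s \<in> S" for s x
  proof -
    have "mnorm (M s) \<le> U"
      unfolding U_def using member_le_sum[of s S "\<lambda>s. mnorm (M s)"] that assms mnorm_nonneg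
      by force
    then show ?thesis using quadratic_form_abs_le[of x "M s"]
      by (meson mult_right_mono order_trans zero_le_power2)
  qed
  moreover have "0 < U" unfolding U_def by (simp add: add_nonneg_pos sum_nonneg mnorm_nonneg)
  ultimately show ?thesis by blast
qed

section \<open>Path products and walks around a cycle\<close>

lemma foldl_label_prod_mult:
  "foldl (\<lambda>M s. A s ** M) (M ** N) ss = foldl (\<lambda>M s. A s ** M) M ss ** N"
  by (induction ss arbitrary: M) (simp_all add: matrix_mul_assoc)

lemma label_prod_append: "label_prod A (xs @ ys) = label_prod A ys ** label_prod A xs"
  unfolding label_prod_def
  using foldl_label_prod_mult[of A "mat 1" "foldl (\<lambda>M s. A s ** M) (mat 1) xs" ys]
  by (simp add: matrix_mul_lid)

lemma path_prod_Nil [simp]: "path_prod A [] = mat 1"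
  unfolding path_prod_def label_prod_def by simp

lemma path_prod_single [simp]: "path_prod A [e] = A (elab e)"
  unfolding path_prod_def label_prod_def by (simp add: matrix_mul_rid)

lemma path_prod_append: "path_prod A (p @ q) = path_prod A q ** path_prod A p"
  unfolding path_prod_def by (simp add: label_prod_append)

lemma path_prod_Cons: "path_prod A (e # p) = path_prod A p ** A (elab e)"
  using path_prod_append[of A "[e]" p] by simp

lemma path_prod_concat_replicate: "path_prod A (concat (replicate q c)) = matpow (path_prod A c) q"
  by (induction q) (simp_all add: path_prod_append matpow_Suc_right del: matpow.simps(2))

lemma is_path_snoc:
  "is_path E (p @ [e]) \<longleftrightarrow> is_path E p \<and> e \<in> E \<and> (p \<noteq> [] \<longrightarrow> etgt (last p) = esrc e)"
  unfolding is_path_def by (auto simp: successively_append_iff)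

lemma finite_accepted: "finite E \<Longrightarrow> finite (accepted E t)"
proof -
  assume "finite E"
  then have "finite (map elab ` {p. set p \<subseteq> E \<and> length p = t})"
    by (intro finite_imageI finite_lists_length_eq)
  moreover have "accepted E t \<subseteq> map elab ` {p. set p \<subseteq> E \<and> length p = t}"
    unfolding accepted_def is_path_def by auto
  ultimately show ?thesis using finite_subset by blast
qed

definition cycle_walk :: "'e list \<Rightarrow> nat \<Rightarrow> nat \<Rightarrow> 'e list" where
  "cycle_walk c i k = map (\<lambda>j. c ! ((i + j) mod length c)) [0..<k]"

lemma length_cycle_walk [simp]: "length (cycle_walk c i k) = k"
  unfolding cycle_walk_def by simp

lemma cycle_walk_0 [simp]: "cycle_walk c i 0 = []"
  unfolding cycle_walk_def by simp

lemma cycle_walk_add: "cycle_walk c i (k + l) = cycle_walk c i k @ cycle_walk c (i + k) l"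
proof -
  have "map f [k..<k+l] = map (\<lambda>j. f (k+j)) [0..<l]" for f :: "nat \<Rightarrow> 'e"
    by (induction l) auto
  moreover have "[0..<k+l] = [0..<k] @ [k..<k+l]" by (rule upt_add_eq_append) simp
  ultimately show ?thesis unfolding cycle_walk_def by (simp add: add.assoc)
qed

lemma cycle_walk_Suc: "cycle_walk c i (Suc k) = c ! (i mod length c) # cycle_walk c (Suc i) k"
  using cycle_walk_add[of c i 1 k] by (simp add: cycle_walk_def)

lemma cycle_walk_mod: "cycle_walk c (i mod length c) k = cycle_walk c i k"
  unfolding cycle_walk_def by (simp add: mod_add_left_eq)

lemma cycle_walk_length: "cycle_walk c 0 (length c) = c"
  unfolding cycle_walk_def by (rule nth_equalityI) auto

lemma cycle_walk_mult_length: "cycle_walk c 0 (q * length c) = concat (replicate q c)"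
proof (induction q)
  case (Suc q)
  have "cycle_walk c 0 (Suc q * length c) = cycle_walk c 0 (q * length c) @ cycle_walk c 0 (length c)"
    using cycle_walk_add[of c 0 "q * length c" "length c"] cycle_walk_mod[of c "q * length c"]
    by (simp add: add.commute)
  then show ?case using Suc by (simp add: cycle_walk_length replicate_append_same[symmetric])
qed (simp add: cycle_walk_def)

lemma path_prod_cycle_walk_mult_length:
  "path_prod A (cycle_walk c 0 (q * length c)) = matpow (path_prod A c) q"
  by (simp add: cycle_walk_mult_length path_prod_concat_replicate)

lemma cycle_next_edge:
  assumes "is_cycle E c"
  shows "etgt (c ! (j mod length c)) = esrc (c ! (Suc j mod length c))"
proof -
  have c0: "c \<noteq> []" and pth: "is_path E c" and closed: "esrc (hd c) = etgt (last c)"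
    using assms unfolding is_cycle_def by auto
  define r where "r = j mod length c"
  have r: "r < length c" unfolding r_def using c0 by simp
  have Suc_mod: "Suc j mod length c = (if Suc r < length c then Suc r else 0)"
    using r unfolding r_def by (auto simp: mod_Suc)
  show ?thesis
  proof (cases "Suc r < length c")
    case True
    then show ?thesis
      using successively_nth[of _ c r] pth Suc_mod unfolding is_path_def r_def by auto
  next
    case False
    then have "r = length c - 1" using r by simp
    then have "c ! r = last c" using c0 by (simp add: last_conv_nth)
    then show ?thesis using False Suc_mod closed c0 unfolding r_def by (simp add: hd_conv_nth)
  qed
qed

lemma is_path_cycle_walk:
  assumes cyc: "is_cycle E c"
  shows "is_path E (cycle_walk c i k)"
proof -
  have "c \<noteq> []" "set c \<subseteq> E" using cyc unfolding is_cycle_def is_path_def by auto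
  then have "set (cycle_walk c i k) \<subseteq> E" unfolding cycle_walk_def by auto
  moreover have "successively (\<lambda>e e'. etgt e = esrc e') (cycle_walk c i k)"
    unfolding successively_conv_nth cycle_walk_def using cycle_next_edge[OF cyc] by simp
  ultimately show ?thesis unfolding is_path_def by simp
qed

lemma short_cycle_walks_bounded:
  assumes "c \<noteq> []"
  shows "\<exists>M>0. \<forall>i l. l \<le> length c \<longrightarrow> mnorm (path_prod A (cycle_walk c i l)) \<le> M"
proof -
  define T where "T = length c"
  define M where "M = (\<Sum>i<T. \<Sum>l\<le>T. mnorm (path_prod A (cycle_walk c i l))) + 1"
  have "mnorm (path_prod A (cycle_walk c i l)) \<le> M" if l: "l \<le> T" for i l
  proof -
    have im: "i mod T < T" using assms T_def by simp
    have "mnorm (path_prod A (cycle_walk c i l)) = mnorm (path_prod A (cycle_walk c (i mod T) l))"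
      by (simp add: T_def cycle_walk_mod)
    also have "\<dots> \<le> (\<Sum>l'\<le>T. mnorm (path_prod A (cycle_walk c (i mod T) l')))"
      by (rule member_le_sum) (use l mnorm_nonneg in auto)
    also have "\<dots> \<le> (\<Sum>i'<T. \<Sum>l'\<le>T. mnorm (path_prod A (cycle_walk c i' l')))"
      by (rule member_le_sum[of "i mod T"]) (use im mnorm_nonneg in \<open>auto intro: sum_nonneg\<close>)
    finally show ?thesis unfolding M_def by simp
  qed
  moreover have "M > 0" unfolding M_def by (simp add: add_nonneg_pos sum_nonneg mnorm_nonneg)
  ultimately show ?thesis unfolding T_def by blast
qed

lemma min_one_power_le_power:
  fixes G :: real
  assumes "0 < G" "r \<le> T"
  shows "min 1 (G ^ T) \<le> G ^ r"
proof (cases "1 \<le> G")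
  case True
  then show ?thesis using one_le_power min.coboundedI1 by blast
next
  case False
  then show ?thesis using assms by (intro min.coboundedI2 power_decreasing) auto
qed

text \<open>Lower half of Gelfand's formula along the cycle: \<open>\<rho>(A\<^sub>c)\<^sup>q \<le> \<parallel>A\<^sub>c\<^sup>q\<parallel>\<close>, and every
  walk of length \<open>t\<close> from position 0 extends to \<open>A\<^sub>c\<^sup>q\<close> by fewer than \<open>length c\<close> more steps.\<close>

lemma cycle_walk_mnorm_lower_bound:
  assumes c: "c \<noteq> []" and G: "0 \<le> G" and rho: "spectral_radius (path_prod A c) = G ^ length c"
  shows "\<exists>a>0. \<forall>t>0. a * G ^ t \<le> mnorm (path_prod A (cycle_walk c 0 t))"
proof (cases "G = 0")
  case True
  then show ?thesis using mnorm_nonneg by (intro exI[of _ 1]) (auto simp: power_0_left)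
next
  case False
  then have G0: "0 < G" using G by simp
  define T where "T = length c"
  obtain M where M: "M > 0" "\<And>i l. l \<le> T \<Longrightarrow> mnorm (path_prod A (cycle_walk c i l)) \<le> M"
    using short_cycle_walks_bounded[OF c] unfolding T_def by blast
  define a where "a = min 1 (G ^ T) / M"
  have "a * G ^ t \<le> mnorm (path_prod A (cycle_walk c 0 t))" for t
  proof -
    define q where "q = Suc (t div T)"
    define r where "r = q * T - t"
    have tq: "t < q * T" unfolding q_def T_def using c
      by (metis div_mult_mod_eq length_greater_0_conv mod_less_divisor mult_Suc add_less_cancel_left add.commute)
    have "t div T * T \<le> t" by (rule div_times_less_eq_dividend)
    then have rT: "r \<le> T" unfolding r_def q_def mult_Suc by linarith
    have "matpow (path_prod A c) q = path_prod A (cycle_walk c 0 (t + r))"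
      using tq by (simp add: r_def T_def path_prod_cycle_walk_mult_length)
    also have "\<dots> = path_prod A (cycle_walk c t r) ** path_prod A (cycle_walk c 0 t)"
      by (simp add: cycle_walk_add path_prod_append)
    finally have "(G ^ T) ^ q \<le> mnorm (path_prod A (cycle_walk c t r) ** path_prod A (cycle_walk c 0 t))"
      using spectral_radius_power_le_mnorm_matpow[of "path_prod A c" q] rho by (simp add: T_def)
    also have "\<dots> \<le> M * mnorm (path_prod A (cycle_walk c 0 t))"
      using mnorm_mult_le M(2)[OF rT] by (meson mnorm_nonneg mult_right_mono order_trans)
    finally have "G ^ (t + r) \<le> M * mnorm (path_prod A (cycle_walk c 0 t))"
      using tq by (simp add: r_def power_mult[symmetric] mult.commute)
    moreover have "min 1 (G ^ T) * G ^ t \<le> G ^ (t + r)"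
      using min_one_power_le_power[OF G0 rT] G0 by (simp add: power_add mult_right_mono)
    ultimately show ?thesis unfolding a_def using M(1) by (simp add: field_simps)
  qed
  moreover have "0 < a" unfolding a_def using G0 M(1) by simp
  ultimately show ?thesis by blast
qed

lemma cycle_walk_rotate:
  assumes "i < length c"
  shows "cycle_walk c i (Suc n * length c)
    = cycle_walk c i (length c - i) @ cycle_walk c 0 (n * length c) @ cycle_walk c 0 i"
proof -
  have split: "Suc n * length c = (length c - i) + (n * length c + i)" using assms by simp
  have "cycle_walk c i (Suc n * length c)
      = cycle_walk c i (length c - i) @ cycle_walk c (i + (length c - i)) (n * length c + i)"
    unfolding split by (rule cycle_walk_add)
  also have "cycle_walk c (i + (length c - i)) (n * length c + i) = cycle_walk c 0 (n * length c + i)"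
    using assms cycle_walk_mod[of c "i + (length c - i)"] cycle_walk_mod[of c 0] by simp
  also have "\<dots> = cycle_walk c 0 (n * length c) @ cycle_walk c 0 i"
    using cycle_walk_add[of c 0 "n * length c" i] cycle_walk_mod[of c "n * length c"]
      cycle_walk_mod[of c 0] by simp
  finally show ?thesis .
qed

lemma cycle_walk_mnorm_small:
  assumes c: "c \<noteq> []" and g: "0 < g" and lt: "spectral_radius (path_prod A c) < g ^ length c"
  shows "\<exists>K>0. \<forall>i. mnorm (path_prod A (cycle_walk c i K)) \<le> g ^ K / 2"
proof -
  define T where "T = length c"
  obtain M where M: "M > 0" "\<And>i l. l \<le> T \<Longrightarrow> mnorm (path_prod A (cycle_walk c i l)) \<le> M"
    using short_cycle_walks_bounded[OF c] unfolding T_def by blast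
  obtain n where n: "mnorm (matpow (path_prod A c) n) \<le> g ^ T / (2 * M\<^sup>2) * (g ^ T) ^ n"
    using mnorm_matpow_eventually_small[OF lt, of "g ^ T / (2 * M\<^sup>2)"] g M(1)
    unfolding T_def by auto
  define K where "K = Suc n * T"
  have "g ^ (n * T) = (g ^ T) ^ n" by (metis mult.commute power_mult)
  then have gK: "g ^ K = g ^ T * (g ^ T) ^ n" unfolding K_def mult_Suc power_add by simp
  have "mnorm (path_prod A (cycle_walk c i K)) \<le> g ^ K / 2" for i
  proof -
    define j where "j = i mod T"
    have j: "j < T" unfolding j_def T_def using c by simp
    have "cycle_walk c i K = cycle_walk c j (T - j) @ cycle_walk c 0 (n * T) @ cycle_walk c 0 j"
      using cycle_walk_rotate[OF j[unfolded T_def], of n] cycle_walk_mod[of c i K]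
      by (simp add: K_def j_def T_def)
    then have "path_prod A (cycle_walk c i K) = path_prod A (cycle_walk c 0 j)
        ** matpow (path_prod A c) n ** path_prod A (cycle_walk c j (T - j))"
      by (simp add: T_def path_prod_append path_prod_cycle_walk_mult_length matrix_mul_assoc)
    then have "mnorm (path_prod A (cycle_walk c i K))
        \<le> mnorm (path_prod A (cycle_walk c 0 j) ** matpow (path_prod A c) n)
          * mnorm (path_prod A (cycle_walk c j (T - j)))"
      by (simp add: mnorm_mult_le)
    also have "\<dots> \<le> mnorm (path_prod A (cycle_walk c 0 j)) * mnorm (matpow (path_prod A c) n)
          * mnorm (path_prod A (cycle_walk c j (T - j)))"
      by (rule mult_right_mono[OF mnorm_mult_le mnorm_nonneg])
    also have "\<dots> \<le> M * (g ^ T / (2 * M\<^sup>2) * (g ^ T) ^ n) * M"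
      using M j n g by (intro mult_mono mnorm_nonneg mult_nonneg_nonneg) auto
    also have "\<dots> = g ^ K / 2"
      using M(1) unfolding gK by (simp add: power2_eq_square field_simps)
    finally show ?thesis .
  qed
  moreover have "0 < K" unfolding K_def T_def using c by simp
  ultimately show ?thesis by blast
qed

section \<open>Quadratic certificates\<close>

definition lmi_matrix ::
  "('s \<Rightarrow> real^'n^'n) \<Rightarrow> real \<Rightarrow> ('v \<Rightarrow> real^'n^'n) \<Rightarrow> ('v,'s) edge \<Rightarrow> real^'n^'n" where
  "lmi_matrix A g Q e = g\<^sup>2 *\<^sub>R Q (esrc e) - transpose (A (elab e)) ** Q (etgt e) ** A (elab e)"

lemma quad_feasible_iff:
  "quad_feasible V E A g Q \<longleftrightarrow> (\<forall>v\<in>V. pos_def (Q v)) \<and> (\<forall>e\<in>E. pos_semidef (lmi_matrix A g Q e))"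
  unfolding quad_feasible_def lmi_matrix_def ..

lemma quadratic_form_lmi_matrix:
  "y \<bullet> (lmi_matrix A g Q e *v y)
    = g\<^sup>2 * (y \<bullet> (Q (esrc e) *v y)) - (A (elab e) *v y) \<bullet> (Q (etgt e) *v (A (elab e) *v y))"
  unfolding lmi_matrix_def
  by (simp add: matrix_vector_mult_diff_rdistrib scaleR_matrix_vector_assoc[symmetric]
      inner_diff_right quadratic_form_congruence[symmetric])

lemma lmi_matrix_add_scaleR:
  fixes Q P :: "'v \<Rightarrow> real^'n^'n::finite"
  shows "lmi_matrix A g (\<lambda>v. Q v + t *\<^sub>R P v) e = lmi_matrix A g Q e + t *\<^sub>R lmi_matrix A g P e"
proof -
  have "transpose X ** (Q w + t *\<^sub>R P w) ** X
      = transpose X ** Q w ** X + t *\<^sub>R (transpose X ** P w ** X)" for X :: "real^'n^'n" and w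
    by (simp add: matrix_add_ldistrib matrix_add_rdistrib matrix_scalar_ac scalar_matrix_assoc)
  then show ?thesis unfolding lmi_matrix_def by (simp add: scaleR_add_right algebra_simps)
qed

lemma symmetric_lmi_matrix:
  assumes "symmetric_mat (Q (esrc e))" "symmetric_mat (Q (etgt e))"
  shows "symmetric_mat (lmi_matrix A g Q e)"
  using assms unfolding symmetric_mat_def lmi_matrix_def
  by (simp add: transpose_diff transpose_scalar matrix_transpose_mul matrix_mul_assoc)

lemma quad_feasible_abs: "quad_feasible V E A \<bar>g\<bar> Q \<longleftrightarrow> quad_feasible V E A g Q"
  unfolding quad_feasible_def by simp

lemma gamma_star_le: "0 \<le> g \<Longrightarrow> quad_feasible V E A g Q \<Longrightarrow> gamma_star V E A \<le> g"
  unfolding gamma_star_def by (rule cInf_lower) (auto intro: bdd_belowI[of _ 0])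

lemma gamma_star_nonneg: "quad_feasible V E A g Q \<Longrightarrow> 0 \<le> gamma_star V E A"
  unfolding gamma_star_def
  by (rule cInf_greatest) (use quad_feasible_abs[of V E A g Q] in \<open>auto intro: abs_ge_zero\<close>)

lemma quadratic_form_lmi_matrix_rate:
  "y \<bullet> (lmi_matrix A g' Q e *v y)
    = y \<bullet> (lmi_matrix A g Q e *v y) - (g\<^sup>2 - g'\<^sup>2) * (y \<bullet> (Q (esrc e) *v y))"
  unfolding quadratic_form_lmi_matrix by (simp add: algebra_simps)

text \<open>Uniform strictness of all constraints buys room to lower the rate: the slack
  \<open>\<mu> |y|\<^sup>2\<close> absorbs \<open>(g\<^sup>2 - g'\<^sup>2) y\<^sup>T Q y\<close> once \<open>g\<^sup>2 - g'\<^sup>2\<close> is small.\<close>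

lemma strictly_feasible_imp_smaller_rate:
  fixes Q :: "'v \<Rightarrow> real^'n^'n::finite"
  assumes aut: "automaton V E" and g: "0 < g" and \<mu>: "0 < \<mu>"
    and pd: "\<forall>v\<in>V. pos_def (Q v)"
    and strict: "\<forall>e\<in>E. \<forall>y. \<mu> * (norm y)\<^sup>2 \<le> y \<bullet> (lmi_matrix A g Q e *v y)"
  shows "\<exists>g'. 0 \<le> g' \<and> g' < g \<and> quad_feasible V E A g' Q"
proof -
  have ends: "esrc e \<in> V" "etgt e \<in> V" if "e \<in> E" for e
    using aut that unfolding automaton_def by auto
  obtain U where U: "U > 0" "\<forall>v\<in>V. \<forall>y. y \<bullet> (Q v *v y) \<le> U * (norm y)\<^sup>2"
    using finite_uniform_quadratic_abs_bound[of V Q] aut unfolding automaton_def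
    by (meson abs_le_D1)
  define \<delta> where "\<delta> = min (\<mu> / U) (g\<^sup>2 / 2)"
  have \<delta>: "0 < \<delta>" "\<delta> * U \<le> \<mu>" "\<delta> < g\<^sup>2"
    unfolding \<delta>_def using \<mu> U(1) g by (auto simp: min_def field_simps)
  define g' where "g' = sqrt (g\<^sup>2 - \<delta>)"
  have g'2: "g'\<^sup>2 = g\<^sup>2 - \<delta>" unfolding g'_def using \<delta>(3) by simp
  have "g' < sqrt (g\<^sup>2)" unfolding g'_def using \<delta>(1) by (intro real_sqrt_less_mono) simp
  then have "g' < g" using g by simp
  moreover have "0 \<le> g'" unfolding g'_def using \<delta>(3) by simp
  moreover have "quad_feasible V E A g' Q"
    unfolding quad_feasible_iff
  proof (intro conjI ballI)
    fix e assume e: "e \<in> E"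
    have "symmetric_mat (lmi_matrix A g' Q e)"
      using pd ends[OF e] unfolding pos_def_def by (intro symmetric_lmi_matrix) auto
    moreover have "0 \<le> y \<bullet> (lmi_matrix A g' Q e *v y)" for y
    proof -
      have "\<delta> * (y \<bullet> (Q (esrc e) *v y)) \<le> \<delta> * (U * (norm y)\<^sup>2)"
        using U(2) ends[OF e] \<delta>(1) by (intro mult_left_mono) auto
      also have "\<dots> \<le> \<mu> * (norm y)\<^sup>2"
        using \<delta>(2) by (simp add: mult.assoc[symmetric] mult_right_mono)
      moreover have "\<mu> * (norm y)\<^sup>2 \<le> y \<bullet> (lmi_matrix A g Q e *v y)" using strict e by blast
      ultimately show ?thesis
        unfolding quadratic_form_lmi_matrix_rate[of y A g' Q e g] g'2 by simp
    qed
    ultimately show "pos_semidef (lmi_matrix A g' Q e)" unfolding pos_semidef_def by blast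
  qed (use pd in blast)
  ultimately show ?thesis by blast
qed

lemma quad_norm_bound_iff_lmi:
  assumes "0 \<le> \<gamma>" and "0 \<le> x \<bullet> (Q (esrc e) *v x)"
  shows "quad_norm Q (etgt e) (A (elab e) *v x) \<le> \<gamma> * quad_norm Q (esrc e) x
    \<longleftrightarrow> 0 \<le> x \<bullet> (lmi_matrix A \<gamma> Q e *v x)"
proof -
  have "\<gamma> * quad_norm Q (esrc e) x = sqrt (\<gamma>\<^sup>2 * (x \<bullet> (Q (esrc e) *v x)))"
    using assms by (simp add: quad_norm_def real_sqrt_mult)
  then show ?thesis unfolding quadratic_form_lmi_matrix by (simp add: quad_norm_def)
qed

lemma pos_def_quadratic_form_nonneg: "pos_def M \<Longrightarrow> 0 \<le> x \<bullet> (M *v x)"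
  unfolding pos_def_def by (cases "x = 0") (auto intro: less_imp_le)

lemma quad_feasible_of_quad_norm_bound:
  assumes aut: "automaton V E" and pd: "\<forall>v\<in>V. pos_def (Q v)" and \<gamma>: "0 \<le> \<gamma>"
    and bound: "\<forall>e\<in>E. \<forall>x. quad_norm Q (etgt e) (A (elab e) *v x) \<le> \<gamma> * quad_norm Q (esrc e) x"
  shows "quad_feasible V E A \<gamma> Q"
  unfolding quad_feasible_iff
proof (intro conjI ballI)
  fix e assume e: "e \<in> E"
  then have ends: "esrc e \<in> V" "etgt e \<in> V" using aut unfolding automaton_def by auto
  then have "symmetric_mat (lmi_matrix A \<gamma> Q e)"
    using pd unfolding pos_def_def by (intro symmetric_lmi_matrix) auto
  moreover have "0 \<le> x \<bullet> (lmi_matrix A \<gamma> Q e *v x)" for x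
    using bound e quad_norm_bound_iff_lmi[where Q=Q and e=e and A=A and x=x,
        OF \<gamma> pos_def_quadratic_form_nonneg[OF bspec[OF pd ends(1)]]]
    by blast
  ultimately show "pos_semidef (lmi_matrix A \<gamma> Q e)" unfolding pos_semidef_def by blast
qed (use pd in blast)

lemma multinorm_value_quad_norm:
  fixes Q :: "'v \<Rightarrow> real^'n^'n::finite"
  assumes aut: "automaton V E" and ne: "E \<noteq> {}"
    and feas: "quad_feasible V E A (gamma_star V E A) Q"
  shows "multinorm_value E A (quad_norm Q) = gamma_star V E A"
proof -
  have ends: "esrc e \<in> V" "etgt e \<in> V" if "e \<in> E" for e
    using aut that unfolding automaton_def by auto
  have pd: "\<forall>v\<in>V. pos_def (Q v)" using feas unfolding quad_feasible_def by auto
  define S where "S = {\<gamma>. \<forall>e\<in>E. \<forall>x. quad_norm Q (etgt e) (A (elab e) *v x) \<le> \<gamma> * quad_norm Q (esrc e) x}"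
  have "gamma_star V E A \<in> S" unfolding S_def
  proof (intro CollectI ballI allI)
    fix e x assume e: "e \<in> E"
    have "0 \<le> x \<bullet> (lmi_matrix A (gamma_star V E A) Q e *v x)"
      using feas e unfolding quad_feasible_iff pos_semidef_def by blast
    then show "quad_norm Q (etgt e) (A (elab e) *v x) \<le> gamma_star V E A * quad_norm Q (esrc e) x"
      using quad_norm_bound_iff_lmi[where Q=Q and e=e and A=A and x=x, OF gamma_star_nonneg[OF feas]
          pos_def_quadratic_form_nonneg[OF bspec[OF pd ends(1)[OF e]]]] by blast
  qed
  moreover have "gamma_star V E A \<le> \<gamma>" if \<gamma>S: "\<gamma> \<in> S" for \<gamma>
  proof -
    obtain e where e: "e \<in> E" using ne by blast
    obtain u :: "real^'n" where "norm u = 1" using vector_choose_size[of 1] by auto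
    then have "u \<noteq> 0" by auto
    then have "0 < quad_norm Q (esrc e) u"
      using pd ends(1)[OF e] unfolding quad_norm_def pos_def_def by auto
    moreover have "0 \<le> quad_norm Q (etgt e) (A (elab e) *v u)"
      unfolding quad_norm_def
      using pos_def_quadratic_form_nonneg[OF bspec[OF pd ends(2)[OF e]]] by simp
    moreover have "quad_norm Q (etgt e) (A (elab e) *v u) \<le> \<gamma> * quad_norm Q (esrc e) u"
      using \<gamma>S e unfolding S_def by blast
    ultimately have \<gamma>0: "0 \<le> \<gamma>" by (metis order_trans zero_le_mult_iff not_less)
    show ?thesis
      using \<gamma>S quad_feasible_of_quad_norm_bound[OF aut pd \<gamma>0] gamma_star_le[OF \<gamma>0]
      unfolding S_def by blast
  qed
  ultimately show ?thesis unfolding multinorm_value_def S_def[symmetric] by (rule cInf_eq_minimum)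
qed

section \<open>Lyapunov matrices along a cycle\<close>

text \<open>A truncated solution of the Stein equation \<open>g\<^sup>2 P\<^sub>i - A\<^sub>i\<^sup>T P\<^sub>i\<^sub>+\<^sub>1 A\<^sub>i = g\<^sup>2 I\<close> along the
  cycle; the truncation error involves only the walks of length \<open>K\<close>.\<close>

definition walk_gramian ::
  "('s \<Rightarrow> real^'n^'n) \<Rightarrow> real \<Rightarrow> ('v,'s) edge list \<Rightarrow> nat \<Rightarrow> nat \<Rightarrow> real^'n^'n" where
  "walk_gramian A g c K i = (\<Sum>k<K. (1 / g ^ (2 * k)) *\<^sub>R
     (transpose (path_prod A (cycle_walk c i k)) ** path_prod A (cycle_walk c i k)))"

lemma quadratic_form_walk_gramian:
  "y \<bullet> (walk_gramian A g c K i *v y)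
    = (\<Sum>k<K. (norm (path_prod A (cycle_walk c i k) *v (y::real^'n::finite)))\<^sup>2 / g ^ (2 * k))"
  unfolding walk_gramian_def
  by (simp add: sum_mult_vec inner_sum_right scaleR_matrix_vector_assoc[symmetric] quadratic_form_gram)

lemma pos_semidef_walk_gramian: "pos_semidef (walk_gramian A g c K i :: real^'n^'n::finite)"
  unfolding pos_semidef_def symmetric_mat_def quadratic_form_walk_gramian
  by (auto simp: walk_gramian_def transpose_sum transpose_scalar matrix_transpose_mul
      intro: sum_nonneg)

lemma walk_gramian_mod: "walk_gramian A g c K (i mod length c) = walk_gramian A g c K i"
  unfolding walk_gramian_def by (simp add: cycle_walk_mod)

lemma walk_gramian_telescope:
  fixes y :: "real^'n::finite"
  assumes g: "g \<noteq> 0"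
  shows "g\<^sup>2 * (y \<bullet> (walk_gramian A g c K i *v y))
      - (A (elab (c ! (i mod length c))) *v y)
        \<bullet> (walk_gramian A g c K (Suc i) *v (A (elab (c ! (i mod length c))) *v y))
    = g\<^sup>2 * ((norm y)\<^sup>2 - (norm (path_prod A (cycle_walk c i K) *v y))\<^sup>2 / g ^ (2 * K))"
proof -
  define Ai where "Ai = A (elab (c ! (i mod length c)))"
  define u where "u k = (norm (path_prod A (cycle_walk c i k) *v y))\<^sup>2 / g ^ (2 * k)" for k
  have shift: "(norm (path_prod A (cycle_walk c (Suc i) k) *v (Ai *v y)))\<^sup>2 / g ^ (2 * k)
      = g\<^sup>2 * u (Suc k)" for k
  proof -
    have "path_prod A (cycle_walk c (Suc i) k) *v (Ai *v y) = path_prod A (cycle_walk c i (Suc k)) *v y"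
      by (simp add: Ai_def cycle_walk_Suc path_prod_Cons matrix_vector_mul_assoc)
    then show ?thesis unfolding u_def using g by (simp add: field_simps power_add power2_eq_square)
  qed
  have "g\<^sup>2 * (y \<bullet> (walk_gramian A g c K i *v y))
      - (Ai *v y) \<bullet> (walk_gramian A g c K (Suc i) *v (Ai *v y))
      = g\<^sup>2 * (\<Sum>k<K. u k - u (Suc k))"
    unfolding quadratic_form_walk_gramian shift
    by (simp add: u_def sum_distrib_left sum_subtractf right_diff_distrib)
  also have "\<dots> = g\<^sup>2 * (u 0 - u K)" by (simp add: sum_lessThan_telescope')
  finally show ?thesis by (simp add: u_def Ai_def)
qed

lemma walk_gramian_decrease:
  fixes y :: "real^'n::finite"
  assumes g: "0 < g" and small: "mnorm (path_prod A (cycle_walk c i K)) \<le> g ^ K / 2"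
  shows "3/4 * g\<^sup>2 * (norm y)\<^sup>2 \<le> g\<^sup>2 * (y \<bullet> (walk_gramian A g c K i *v y))
      - (A (elab (c ! (i mod length c))) *v y)
        \<bullet> (walk_gramian A g c K (Suc i) *v (A (elab (c ! (i mod length c))) *v y))"
proof -
  let ?z = "path_prod A (cycle_walk c i K) *v y"
  have "norm ?z \<le> g ^ K / 2 * norm y"
    using norm_mult_vec_le_mnorm small by (meson mult_right_mono norm_ge_zero order_trans)
  then have "(norm ?z)\<^sup>2 \<le> (g ^ K / 2 * norm y)\<^sup>2" by (intro power_mono) auto
  moreover have "g ^ (2 * K) = (g ^ K)\<^sup>2" by (rule power_even_eq)
  ultimately have "(norm ?z)\<^sup>2 / g ^ (2 * K) \<le> (norm y)\<^sup>2 / 4"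
    using g by (simp add: field_simps power_mult_distrib)
  then have "g\<^sup>2 * ((norm ?z)\<^sup>2 / g ^ (2 * K)) \<le> g\<^sup>2 * ((norm y)\<^sup>2 / 4)"
    by (intro mult_left_mono) auto
  then show ?thesis
    unfolding walk_gramian_telescope[OF g[THEN less_imp_neq, symmetric]]
    by (simp add: right_diff_distrib)
qed

lemma simple_cycle_lyapunov:
  fixes A :: "'s \<Rightarrow> real^'n^'n::finite"
  assumes cyc: "simple_cycle E c" and g: "0 < g"
    and lt: "spectral_radius (path_prod A c) < g ^ length c"
  shows "\<exists>P. (\<forall>v. pos_semidef (P v :: real^'n^'n))
    \<and> (\<forall>e\<in>set c. \<forall>y. 3/4 * g\<^sup>2 * (norm y)\<^sup>2 \<le> y \<bullet> (lmi_matrix A g P e *v y))"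
proof -
  define T where "T = length c"
  have c0: "c \<noteq> []" and distinct: "distinct (map esrc c)" and is_cyc: "is_cycle E c"
    using cyc unfolding simple_cycle_def is_cycle_def by auto
  obtain K where K: "\<And>i. mnorm (path_prod A (cycle_walk c i K)) \<le> g ^ K / 2"
    using cycle_walk_mnorm_small[OF c0 g lt] by blast
  define pos where "pos = the_inv_into {..<T} (\<lambda>i. esrc (c ! i))"
  have inj: "inj_on (\<lambda>i. esrc (c ! i)) {..<T}"
    using nth_eq_iff_index_eq[OF distinct] by (auto simp: inj_on_def T_def)
  have pos: "pos (esrc (c ! i)) = i" if "i < T" for i
    unfolding pos_def using the_inv_into_f_f[OF inj, of i] that by simp
  define P where "P v = walk_gramian A g c K (pos v)" for v
  have "3/4 * g\<^sup>2 * (norm y)\<^sup>2 \<le> y \<bullet> (lmi_matrix A g P e *v y)" if e: "e \<in> set c" for e y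
  proof -
    obtain i where i: "i < T" "e = c ! i" using e unfolding T_def by (metis in_set_conv_nth)
    have "etgt e = esrc (c ! (Suc i mod T))"
      using cycle_next_edge[OF is_cyc, of i] i unfolding T_def by simp
    then have "P (etgt e) = walk_gramian A g c K (Suc i)"
      using pos[of "Suc i mod T"] c0 walk_gramian_mod[of A g c K "Suc i"] by (simp add: P_def T_def)
    moreover have "P (esrc e) = walk_gramian A g c K i" using pos i by (simp add: P_def)
    ultimately show ?thesis
      using walk_gramian_decrease[OF g K[of i], of y] i by (simp add: quadratic_form_lmi_matrix T_def)
  qed
  moreover have "pos_semidef (P v)" for v unfolding P_def by (rule pos_semidef_walk_gramian)
  ultimately show ?thesis by blast
qed

section \<open>Consequences of a quadratic certificate\<close>

definition cjsr_seq :: "('v,'s) edge set \<Rightarrow> ('s \<Rightarrow> real^'n^'n) \<Rightarrow> nat \<Rightarrow> real" where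
  "cjsr_seq E A t = Max ((\<lambda>ss. mnorm (label_prod A ss) powr (1 / real t)) ` accepted E t)"

lemma cjsr_eq_lim_cjsr_seq: "cjsr E A = lim (cjsr_seq E A)"
  unfolding cjsr_def cjsr_seq_def ..

lemma cjsr_seq_ge:
  assumes "finite E" "is_path E p"
  shows "mnorm (path_prod A p) powr (1 / real (length p)) \<le> cjsr_seq E A (length p)"
  unfolding cjsr_seq_def path_prod_def using assms finite_accepted[of E]
  by (intro Max_ge) (auto simp: accepted_def)

lemma cjsr_seq_le:
  assumes "finite E" "accepted E t \<noteq> {}"
    and "\<And>p. is_path E p \<Longrightarrow> length p = t \<Longrightarrow> mnorm (path_prod A p) powr (1 / real t) \<le> b"
  shows "cjsr_seq E A t \<le> b"
  unfolding cjsr_seq_def using assms finite_accepted[of E]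
  by (intro Max.boundedI) (auto simp: accepted_def path_prod_def)

lemma power_powr_inverse: "0 \<le> (g::real) \<Longrightarrow> 0 < t \<Longrightarrow> (g ^ t) powr (1 / real t) = g"
  by (cases "g = 0") (simp_all add: powr_realpow[symmetric] powr_powr)

lemma powr_inverse_tendsto_1: "0 < (a::real) \<Longrightarrow> (\<lambda>t. a powr (1 / real t)) \<longlonglongrightarrow> 1"
proof -
  assume a: "0 < a"
  have "\<forall>\<^sub>F t in sequentially. root t a = a powr (1 / real t)"
    using eventually_gt_at_top[of 0] by eventually_elim (use a in \<open>simp add: root_powr_inverse\<close>)
  with LIMSEQ_root_const[OF a] show ?thesis by (rule Lim_transform_eventually)
qed

locale quad_certificate =
  fixes V :: "'v set" and E :: "('v,'s) edge set" and A :: "'s \<Rightarrow> real^'n^'n::finite"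
    and g :: real and Q :: "'v \<Rightarrow> real^'n^'n"
  assumes automaton: "automaton V E"
    and feasible: "quad_feasible V E A g Q"
    and rate_nonneg: "0 \<le> g"
begin

lemma finite_V: "finite V" and finite_E: "finite E"
  using automaton unfolding automaton_def by auto

lemma edge_ends: "e \<in> E \<Longrightarrow> esrc e \<in> V" "e \<in> E \<Longrightarrow> etgt e \<in> V"
  using automaton unfolding automaton_def by auto

lemma pos_def_Q: "v \<in> V \<Longrightarrow> pos_def (Q v)"
  using feasible unfolding quad_feasible_def by auto

lemma pos_semidef_lmi: "e \<in> E \<Longrightarrow> pos_semidef (lmi_matrix A g Q e)"
  using feasible unfolding quad_feasible_iff by auto

lemma edge_contraction:
  "e \<in> E \<Longrightarrow> (A (elab e) *v x) \<bullet> (Q (etgt e) *v (A (elab e) *v x)) \<le> g\<^sup>2 * (x \<bullet> (Q (esrc e) *v x))"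
  using pos_semidef_lmi[of e] unfolding pos_semidef_def quadratic_form_lmi_matrix by auto

lemma path_contraction:
  "is_path E p \<Longrightarrow> p \<noteq> [] \<Longrightarrow> (path_prod A p *v x) \<bullet> (Q (etgt (last p)) *v (path_prod A p *v x))
     \<le> g ^ (2 * length p) * (x \<bullet> (Q (esrc (hd p)) *v x))"
proof (induction p rule: rev_induct)
  case (snoc e p)
  have pe: "is_path E p" "e \<in> E" "p \<noteq> [] \<longrightarrow> etgt (last p) = esrc e"
    using snoc.prems(1) is_path_snoc by blast+
  show ?case
  proof (cases "p = []")
    case True
    then show ?thesis using edge_contraction[OF pe(2), of x] by simp
  next
    case False
    let ?y = "path_prod A p *v x"
    have "path_prod A (p @ [e]) *v x = A (elab e) *v ?y"
      by (simp add: path_prod_append matrix_vector_mul_assoc)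
    moreover have "(A (elab e) *v ?y) \<bullet> (Q (etgt e) *v (A (elab e) *v ?y))
        \<le> g\<^sup>2 * (?y \<bullet> (Q (etgt (last p)) *v ?y))"
      using edge_contraction[OF pe(2), of ?y] pe(3) False by simp
    moreover have "g\<^sup>2 * (?y \<bullet> (Q (etgt (last p)) *v ?y))
        \<le> g\<^sup>2 * (g ^ (2 * length p) * (x \<bullet> (Q (esrc (hd p)) *v x)))"
      using snoc.IH pe(1) False by (intro mult_left_mono) auto
    ultimately show ?thesis using False by (simp add: power2_eq_square mult.assoc)
  qed
qed simp

lemma path_prod_mnorm_bound:
  "\<exists>K>0. \<forall>p. is_path E p \<longrightarrow> p \<noteq> [] \<longrightarrow> mnorm (path_prod A p) \<le> K * g ^ length p"
proof -
  obtain c where c: "c > 0" "\<forall>v\<in>V. \<forall>x. c * (norm x)\<^sup>2 \<le> x \<bullet> (Q v *v x)"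
    using finite_uniform_quadratic_lower_bound[OF finite_V, of Q] pos_def_Q
    unfolding pos_def_def by blast
  obtain U where U: "U > 0" "\<forall>v\<in>V. \<forall>x. x \<bullet> (Q v *v x) \<le> U * (norm x)\<^sup>2"
    using finite_uniform_quadratic_abs_bound[OF finite_V, of Q] by (meson abs_le_D1)
  define K where "K = sqrt (U / c)"
  have "mnorm (path_prod A p) \<le> K * g ^ length p" if p: "is_path E p" "p \<noteq> []" for p
  proof (rule mnorm_le)
    fix x
    let ?y = "path_prod A p *v x"
    have "hd p \<in> E" "last p \<in> E" using p unfolding is_path_def by auto
    then have ends: "esrc (hd p) \<in> V" "etgt (last p) \<in> V" using edge_ends by auto
    have "c * (norm ?y)\<^sup>2 \<le> ?y \<bullet> (Q (etgt (last p)) *v ?y)" using c(2) ends by blast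
    also have "\<dots> \<le> g ^ (2 * length p) * (x \<bullet> (Q (esrc (hd p)) *v x))"
      by (rule path_contraction[OF p])
    also have "\<dots> \<le> g ^ (2 * length p) * (U * (norm x)\<^sup>2)"
      using U(2) ends rate_nonneg by (intro mult_left_mono) auto
    finally have "c * (norm ?y)\<^sup>2 \<le> U * (g ^ (2 * length p) * (norm x)\<^sup>2)"
      by (simp only: mult.left_commute)
    then have "(norm ?y)\<^sup>2 \<le> U / c * (g ^ (2 * length p) * (norm x)\<^sup>2)"
      using c(1) by (simp add: field_simps)
    also have "\<dots> = (K * g ^ length p * norm x)\<^sup>2"
      using c(1) U(1) by (simp add: K_def power_mult_distrib power_even_eq)
    finally have "(norm ?y)\<^sup>2 \<le> (K * g ^ length p * norm x)\<^sup>2" .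
    then show "norm ?y \<le> K * g ^ length p * norm x"
      by (rule power2_le_imp_le) (use c(1) U(1) rate_nonneg in \<open>simp add: K_def\<close>)
  qed
  moreover have "K > 0" unfolding K_def using c(1) U(1) by simp
  ultimately show ?thesis by blast
qed

lemma spectral_radius_cycle_le:
  assumes cyc: "is_cycle E c"
  shows "spectral_radius (path_prod A c) \<le> g ^ length c"
proof -
  obtain K where K: "\<forall>p. is_path E p \<longrightarrow> p \<noteq> [] \<longrightarrow> mnorm (path_prod A p) \<le> K * g ^ length p"
    using path_prod_mnorm_bound by blast
  have bound: "spectral_radius (path_prod A c) ^ q \<le> K * (g ^ length c) ^ q" if "0 < q" for q
  proof -
    let ?p = "cycle_walk c 0 (q * length c)"
    have "?p \<noteq> []" using cyc that unfolding is_cycle_def by (auto simp: cycle_walk_def)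
    then have "mnorm (path_prod A ?p) \<le> K * g ^ length ?p"
      by (rule K[rule_format, OF is_path_cycle_walk[OF cyc]])
    then have "mnorm (path_prod A ?p) \<le> K * g ^ (q * length c)" by simp
    moreover have "spectral_radius (path_prod A c) ^ q \<le> mnorm (path_prod A ?p)"
      using spectral_radius_power_le_mnorm_matpow by (simp add: path_prod_cycle_walk_mult_length)
    moreover have "g ^ (q * length c) = (g ^ length c) ^ q" by (metis power_mult mult.commute)
    ultimately show ?thesis by simp
  qed
  show ?thesis by (rule le_of_power_le_const_mult_power[OF zero_le_power[OF rate_nonneg] bound])
qed

lemma cjsr_seq_upper_bound:
  assumes cyc: "is_cycle E c"
  shows "\<exists>K>0. \<forall>t>0. cjsr_seq E A t \<le> K powr (1 / real t) * g"
proof -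
  obtain K where K: "K > 0" "\<forall>p. is_path E p \<longrightarrow> p \<noteq> [] \<longrightarrow> mnorm (path_prod A p) \<le> K * g ^ length p"
    using path_prod_mnorm_bound by blast
  have "cjsr_seq E A t \<le> K powr (1 / real t) * g" if t: "0 < t" for t
  proof (rule cjsr_seq_le[OF finite_E])
    show "accepted E t \<noteq> {}"
      unfolding accepted_def using is_path_cycle_walk[OF cyc, of 0 t] by force
    fix p assume p: "is_path E p" "length p = t"
    then have "mnorm (path_prod A p) \<le> K * g ^ t" using K(2) t by auto
    then have "mnorm (path_prod A p) powr (1 / real t) \<le> (K * g ^ t) powr (1 / real t)"
      by (intro powr_mono2) (auto simp: mnorm_nonneg)
    also have "\<dots> = K powr (1 / real t) * g"
      using K(1) rate_nonneg t by (simp add: powr_mult power_powr_inverse)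
    finally show "mnorm (path_prod A p) powr (1 / real t) \<le> K powr (1 / real t) * g" .
  qed
  then show ?thesis using K(1) by blast
qed

lemma cjsr_seq_lower_bound:
  assumes cyc: "is_cycle E c" and rho: "spectral_radius (path_prod A c) = g ^ length c"
  shows "\<exists>a>0. \<forall>t>0. a powr (1 / real t) * g \<le> cjsr_seq E A t"
proof -
  obtain a where a: "a > 0" "\<forall>t>0. a * g ^ t \<le> mnorm (path_prod A (cycle_walk c 0 t))"
    using cycle_walk_mnorm_lower_bound[OF _ rate_nonneg rho] cyc unfolding is_cycle_def by blast
  have "a powr (1 / real t) * g \<le> cjsr_seq E A t" if t: "0 < t" for t
  proof -
    have "a powr (1 / real t) * g = (a * g ^ t) powr (1 / real t)"
      using a(1) rate_nonneg t by (simp add: powr_mult power_powr_inverse)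
    also have "\<dots> \<le> mnorm (path_prod A (cycle_walk c 0 t)) powr (1 / real t)"
      using a t rate_nonneg by (intro powr_mono2) auto
    also have "\<dots> \<le> cjsr_seq E A t"
      using cjsr_seq_ge[OF finite_E is_path_cycle_walk[OF cyc]] by simp
    finally show ?thesis .
  qed
  then show ?thesis using a(1) by blast
qed

lemma cjsr_eq_rate:
  assumes cyc: "is_cycle E c" and rho: "spectral_radius (path_prod A c) = g ^ length c"
  shows "cjsr E A = g"
proof -
  obtain K where K: "K > 0" "\<forall>t>0. cjsr_seq E A t \<le> K powr (1 / real t) * g"
    using cjsr_seq_upper_bound[OF cyc] by blast
  obtain a where a: "a > 0" "\<forall>t>0. a powr (1 / real t) * g \<le> cjsr_seq E A t"
    using cjsr_seq_lower_bound[OF cyc rho] by blast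
  have "cjsr_seq E A \<longlonglongrightarrow> g"
  proof (rule tendsto_sandwich)
    show "\<forall>\<^sub>F t in sequentially. a powr (1 / real t) * g \<le> cjsr_seq E A t"
      using eventually_gt_at_top[of 0] by eventually_elim (use a(2) in blast)
    show "\<forall>\<^sub>F t in sequentially. cjsr_seq E A t \<le> K powr (1 / real t) * g"
      using eventually_gt_at_top[of 0] by eventually_elim (use K(2) in blast)
  qed (use tendsto_mult_right[OF powr_inverse_tendsto_1, of _ g] a(1) K(1) in auto)
  then show ?thesis unfolding cjsr_eq_lim_cjsr_seq by (rule limI)
qed

text \<open>Off the critical edges the constraints of \<open>Q\<close> are strict, on them those of \<open>P\<close> are; a small
  multiple of \<open>P\<close> therefore makes every constraint strict without spoiling the others.\<close>

lemma strict_perturbation: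
  assumes P: "\<forall>v. pos_semidef (P v)"
    and on_F: "\<forall>e\<in>F. \<forall>y. \<mu> * (norm y)\<^sup>2 \<le> y \<bullet> (lmi_matrix A g P e *v y)" and \<mu>: "0 < \<mu>"
    and off_F: "\<forall>e\<in>E - F. pos_def (lmi_matrix A g Q e)"
  shows "\<exists>t>0. \<exists>\<mu>'>0. \<forall>e\<in>E. \<forall>y.
    \<mu>' * (norm y)\<^sup>2 \<le> y \<bullet> (lmi_matrix A g (\<lambda>v. Q v + t *\<^sub>R P v) e *v y)"
proof -
  obtain \<epsilon> where \<epsilon>: "\<epsilon> > 0" "\<forall>e\<in>E - F. \<forall>y. \<epsilon> * (norm y)\<^sup>2 \<le> y \<bullet> (lmi_matrix A g Q e *v y)"
    using finite_uniform_quadratic_lower_bound[of "E - F" "lmi_matrix A g Q"] finite_E off_F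
    unfolding pos_def_def by blast
  obtain D where D: "D > 0" "\<forall>e\<in>E. \<forall>y. \<bar>y \<bullet> (lmi_matrix A g P e *v y)\<bar> \<le> D * (norm y)\<^sup>2"
    using finite_uniform_quadratic_abs_bound[OF finite_E] by blast
  define t where "t = \<epsilon> / (2 * D)"
  have t: "0 < t" "t * D = \<epsilon> / 2" unfolding t_def using \<epsilon>(1) D(1) by auto
  define \<mu>' where "\<mu>' = min (\<epsilon> / 2) (t * \<mu>)"
  have "\<mu>' * (norm y)\<^sup>2 \<le> y \<bullet> (lmi_matrix A g (\<lambda>v. Q v + t *\<^sub>R P v) e *v y)" if e: "e \<in> E" for e y
  proof -
    have split: "y \<bullet> (lmi_matrix A g (\<lambda>v. Q v + t *\<^sub>R P v) e *v y)
        = y \<bullet> (lmi_matrix A g Q e *v y) + t * (y \<bullet> (lmi_matrix A g P e *v y))"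
      by (simp add: lmi_matrix_add_scaleR quadratic_form_add_scaleR)
    show ?thesis
    proof (cases "e \<in> F")
      case True
      have "0 \<le> y \<bullet> (lmi_matrix A g Q e *v y)" using pos_semidef_lmi[OF e] unfolding pos_semidef_def by blast
      moreover have "t * (\<mu> * (norm y)\<^sup>2) \<le> t * (y \<bullet> (lmi_matrix A g P e *v y))"
        using on_F True t(1) by (intro mult_left_mono) auto
      moreover have "\<mu>' * (norm y)\<^sup>2 \<le> t * \<mu> * (norm y)\<^sup>2"
        unfolding \<mu>'_def by (intro mult_right_mono) auto
      ultimately show ?thesis unfolding split by (simp add: mult.assoc)
    next
      case False
      have "\<epsilon> * (norm y)\<^sup>2 \<le> y \<bullet> (lmi_matrix A g Q e *v y)" using \<epsilon>(2) e False by blast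
      moreover have "- (D * (norm y)\<^sup>2) \<le> y \<bullet> (lmi_matrix A g P e *v y)"
        using D(2) e by (meson abs_le_D2 neg_le_iff_le minus_le_iff)
      then have "t * (- (D * (norm y)\<^sup>2)) \<le> t * (y \<bullet> (lmi_matrix A g P e *v y))"
        using t(1) by (intro mult_left_mono) auto
      moreover have "\<mu>' * (norm y)\<^sup>2 \<le> \<epsilon> / 2 * (norm y)\<^sup>2"
        unfolding \<mu>'_def by (intro mult_right_mono) auto
      moreover have "t * (D * (norm y)\<^sup>2) = \<epsilon> / 2 * (norm y)\<^sup>2" using t(2) by (metis mult.assoc)
      ultimately show ?thesis unfolding split by linarith
    qed
  qed
  moreover have "0 < \<mu>'" unfolding \<mu>'_def using \<epsilon>(1) t(1) \<mu> by simp
  ultimately show ?thesis using t(1) by blast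
qed

lemma rate_improvement:
  assumes cyc: "simple_cycle E c"
    and off_cycle: "\<forall>e\<in>E - set c. pos_def (lmi_matrix A g Q e)"
    and lt: "spectral_radius (path_prod A c) < g ^ length c"
  shows "\<exists>g' Q'. 0 \<le> g' \<and> g' < g \<and> quad_feasible V E A g' Q'"
proof -
  have "0 < g ^ length c" using lt spectral_radius_nonneg[of "path_prod A c"] by linarith
  moreover have "c \<noteq> []" using cyc unfolding simple_cycle_def is_cycle_def by simp
  ultimately have g: "0 < g" using rate_nonneg by (cases "g = 0") (auto simp: power_0_left)
  obtain P where P: "\<forall>v. pos_semidef (P v)"
    "\<forall>e\<in>set c. \<forall>y. 3/4 * g\<^sup>2 * (norm y)\<^sup>2 \<le> y \<bullet> (lmi_matrix A g P e *v y)"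
    using simple_cycle_lyapunov[OF cyc g lt] by blast
  obtain t \<mu> where t: "0 < t" and \<mu>: "0 < \<mu>"
    and strict: "\<forall>e\<in>E. \<forall>y. \<mu> * (norm y)\<^sup>2 \<le> y \<bullet> (lmi_matrix A g (\<lambda>v. Q v + t *\<^sub>R P v) e *v y)"
    using strict_perturbation[OF P(1) P(2) _ off_cycle] g by auto
  have "pos_def (Q v + t *\<^sub>R P v)" if "v \<in> V" for v
    using pos_def_Q[OF that] P(1) t
    unfolding pos_def_def pos_semidef_def symmetric_mat_def
    by (auto simp: transpose_add transpose_scalar quadratic_form_add_scaleR add_pos_nonneg)
  then show ?thesis
    using strictly_feasible_imp_smaller_rate[OF automaton g \<mu> _ strict] by blast
qed

end

theorem theorem3p12:
  fixes V :: "'v set" and E :: "('v,'s) edge set"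
    and A :: "'s \<Rightarrow> real^'n^'n" and Q :: "'v \<Rightarrow> real^'n^'n"
  assumes aut: "automaton V E"
    and attained: "quad_feasible V E A (gamma_star V E A) Q"
    and cyc: "simple_cycle E c"
    and Eprime: "{e \<in> E. lambda_min ((gamma_star V E A)\<^sup>2 *\<^sub>R Q (esrc e)
                   - transpose (A (elab e)) ** Q (etgt e) ** A (elab e)) = 0} = set c"
  shows "multinorm_value E A (quad_norm Q) = gamma_star V E A
     \<and> extremal E A (quad_norm Q)
     \<and> cjsr E A = spectral_radius (path_prod A c) powr (1 / real (length c))"
proof -
  let ?g = "gamma_star V E A" and ?Ac = "path_prod A c"
  interpret quad_certificate V E A ?g Q
    using aut attained gamma_star_nonneg[OF attained] by unfold_locales
  have is_cyc: "is_cycle E c" using cyc unfolding simple_cycle_def by simp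
  have "?g ^ length c \<le> spectral_radius ?Ac"
  proof (rule ccontr)
    assume "\<not> ?g ^ length c \<le> spectral_radius ?Ac"
    moreover have "\<forall>e\<in>E - set c. pos_def (lmi_matrix A ?g Q e)"
      using Eprime pos_semidef_lmi pos_semidef_lambda_min_nonzero_imp_pos_def
      unfolding lmi_matrix_def by blast
    ultimately obtain g' Q' where "0 \<le> g'" "g' < ?g" "quad_feasible V E A g' Q'"
      using rate_improvement[OF cyc] by force
    then show False using gamma_star_le by fastforce
  qed
  then have rho: "spectral_radius ?Ac = ?g ^ length c"
    using spectral_radius_cycle_le[OF is_cyc] by simp
  have "E \<noteq> {}" using is_cyc unfolding is_cycle_def is_path_def by auto
  then have "multinorm_value E A (quad_norm Q) = ?g"
    by (rule multinorm_value_quad_norm[OF aut _ attained])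
  moreover have "cjsr E A = ?g" by (rule cjsr_eq_rate[OF is_cyc rho])
  moreover have "spectral_radius ?Ac powr (1 / real (length c)) = ?g"
    using rho rate_nonneg is_cyc unfolding is_cycle_def by (simp add: power_powr_inverse)
  ultimately show ?thesis unfolding extremal_def by simp
qed

end
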